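(* Fix $J+1\le k\le M$, nonnegative reals $a_{J+1},\dots,a_{M+L}$, and the test channels $q_\kappa$ (on finite alphabets) for all $\kappa\in\{J+1,\dots,M\}\setminus\{k\}$. Consider the minimization of $$\omega(q_k)=\sum_{i=J+1}^M a_iR^0_i+\sum_{l=1}^L a_{M+l}D^0_l$$ over all finite alphabets $\mathcal Z_k$ and all test channels $q_k(z_k|x_k)$ (equivalently, over all pairs $(p'_k,q'_k)$ with $p'_k$ a pmf on a finite $\mathcal Z_k$ and $q'_k(\cdot|z_k)\in\Delta_{\mathcal X_k}$ satisfying $p_k(x_k)=\sum_{z_k}p'_k(z_k)q'_k(x_k|z_k)$ for all $x_k$). Then this minimum is attained, and it is attained by some test channel whose output alphabet satisfies $|\mathcal Z_k|\le|\mathcal X_k|$.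
   Context: Let $M\ge1$, $0\le J\le M$, $L\ge1$. Let $X_1,\dots,X_M,S,V$ be random variables on finite alphabets with joint pmf $p(x_1,\dots,x_M,s,v)$; for $1\le l\le L$, $\hat{\mathcal V}_l$ is a finite reconstruction alphabet and $d_l:\mathcal V\times\hat{\mathcal V}_l\to[0,d_{l,\max}]$ a bounded distortion measure. For $J+1\le \kappa\le M$, $Z_\kappa$ takes values in a finite alphabet $\mathcal Z_\kappa$ and is generated by a test channel $q_\kappa(z_\kappa|x_\kappa)$, so that $(X_1,\dots,X_M,S,V,Z_{J+1},\dots,Z_M)$ has joint pmf $p(x_1,\dots,x_M,s,v)\prod_{\kappa=J+1}^M q_\kappa(z_\kappa|x_\kappa)$. For $A$ a set of indices, $X_A=(X_j)_{j\in A}$, $Z_A=(Z_j)_{j\in A}$. Define $R^0_i=I(X_i;Z_i\mid X_{\{1,\dots,J\}},Z_{\{J+1,\dots,i-1\}},S)$ for $J+1\le i\le M$, and $D^0_l=\min_{\psi_l}\mathbb E\,d_l(V,\psi_l(X_{\{1,\dots,J\}},Z_{\{J+1,\dots,M\}},S))$, the minimum over all maps $\psi_l:\mathcal X_1\times\dots\times\mathcal X_J\times\mathcal Z_{J+1}\times\dots\times\mathcal Z_M\times\mathcal S\to\hat{\mathcal V}_l$. $p_k$ is the marginal pmf of $X_k$, $p'_k$ the marginal pmf of $Z_k$, and $q'_k(x_k|z_k)$ the conditional pmf of $X_k$ given $Z_k=z_k$. $\Delta_{\mathcal X_k}$ is the probability simplex of pmfs on $\mathcal X_k$. *)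

theory Defs
  imports Complex_Main "HOL-Library.FuncSet"
begin

definition marg :: "'o set \<Rightarrow> ('o \<Rightarrow> real) \<Rightarrow> ('o \<Rightarrow> 'b) \<Rightarrow> 'b \<Rightarrow> real" where
  "marg Om P f b = sum P {w \<in> Om. f w = b}"

definition cond_mutual_info ::
  "'o set \<Rightarrow> ('o \<Rightarrow> real) \<Rightarrow> ('o \<Rightarrow> 'b) \<Rightarrow> ('o \<Rightarrow> 'c) \<Rightarrow> ('o \<Rightarrow> 'e) \<Rightarrow> real" where
  "cond_mutual_info Om P A B C =
     (\<Sum>w\<in>Om. if P w = 0 then 0 else
        P w * log 2 ((marg Om P (\<lambda>u. (A u, B u, C u)) (A w, B w, C w) * marg Om P C (C w)) /
                     (marg Om P (\<lambda>u. (A u, C u)) (A w, C w) * marg Om P (\<lambda>u. (B u, C u)) (B w, C w))))"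

definition is_channel :: "'a set \<Rightarrow> nat \<Rightarrow> ('a \<Rightarrow> nat \<Rightarrow> real) \<Rightarrow> bool" where
  "is_channel A N q \<longleftrightarrow> (\<forall>x\<in>A. (\<forall>z<N. 0 \<le> q x z) \<and> (\<Sum>z<N. q x z) = 1)"

definition src_space :: "nat \<Rightarrow> (nat \<Rightarrow> 'a set) \<Rightarrow> 's set \<Rightarrow> 'v set \<Rightarrow> ((nat \<Rightarrow> 'a) \<times> 's \<times> 'v) set" where
  "src_space M AX AS AV = PiE {1..M} AX \<times> AS \<times> AV"

definition joint_space :: "nat \<Rightarrow> nat \<Rightarrow> (nat \<Rightarrow> 'a set) \<Rightarrow> 's set \<Rightarrow> 'v set \<Rightarrow> (nat \<Rightarrow> nat)
    \<Rightarrow> (((nat \<Rightarrow> 'a) \<times> 's \<times> 'v) \<times> (nat \<Rightarrow> nat)) set" where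
  "joint_space M J AX AS AV n = src_space M AX AS AV \<times> PiE {J+1..M} (\<lambda>\<kappa>. {0..<n \<kappa>})"

definition joint_pmf :: "nat \<Rightarrow> nat \<Rightarrow> ((nat \<Rightarrow> 'a) \<times> 's \<times> 'v \<Rightarrow> real) \<Rightarrow> (nat \<Rightarrow> 'a \<Rightarrow> nat \<Rightarrow> real)
    \<Rightarrow> ((nat \<Rightarrow> 'a) \<times> 's \<times> 'v) \<times> (nat \<Rightarrow> nat) \<Rightarrow> real" where
  "joint_pmf M J p q = (\<lambda>((x, s, v), z). p (x, s, v) * (\<Prod>\<kappa>\<in>{J+1..M}. q \<kappa> (x \<kappa>) (z \<kappa>)))"

definition rate0 :: "nat \<Rightarrow> nat \<Rightarrow> (nat \<Rightarrow> 'a set) \<Rightarrow> 's set \<Rightarrow> 'v set \<Rightarrow> ((nat \<Rightarrow> 'a) \<times> 's \<times> 'v \<Rightarrow> real)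
    \<Rightarrow> (nat \<Rightarrow> nat) \<Rightarrow> (nat \<Rightarrow> 'a \<Rightarrow> nat \<Rightarrow> real) \<Rightarrow> nat \<Rightarrow> real" where
  "rate0 M J AX AS AV p n q i =
     cond_mutual_info (joint_space M J AX AS AV n) (joint_pmf M J p q)
       (\<lambda>((x, s, v), z). x i)
       (\<lambda>((x, s, v), z). z i)
       (\<lambda>((x, s, v), z). (restrict x {1..J}, restrict z {J+1..<i}, s))"

definition dist0 :: "nat \<Rightarrow> nat \<Rightarrow> (nat \<Rightarrow> 'a set) \<Rightarrow> 's set \<Rightarrow> 'v set \<Rightarrow> ((nat \<Rightarrow> 'a) \<times> 's \<times> 'v \<Rightarrow> real)
    \<Rightarrow> (nat \<Rightarrow> nat) \<Rightarrow> (nat \<Rightarrow> 'a \<Rightarrow> nat \<Rightarrow> real) \<Rightarrow> (nat \<Rightarrow> 'r set) \<Rightarrow> (nat \<Rightarrow> 'v \<Rightarrow> 'r \<Rightarrow> real)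
    \<Rightarrow> nat \<Rightarrow> real" where
  "dist0 M J AX AS AV p n q AR d l =
     Inf ((\<lambda>\<psi> :: (nat \<Rightarrow> 'a) \<times> (nat \<Rightarrow> nat) \<times> 's \<Rightarrow> 'r.
            \<Sum>w\<in>joint_space M J AX AS AV n.
              joint_pmf M J p q w *
              (case w of ((x, s, v), z) \<Rightarrow> d l v (\<psi> (restrict x {1..J}, restrict z {J+1..M}, s))))
          ` {\<psi>. \<forall>y. \<psi> y \<in> AR l})"

definition objective :: "nat \<Rightarrow> nat \<Rightarrow> nat \<Rightarrow> (nat \<Rightarrow> 'a set) \<Rightarrow> 's set \<Rightarrow> 'v set
    \<Rightarrow> ((nat \<Rightarrow> 'a) \<times> 's \<times> 'v \<Rightarrow> real) \<Rightarrow> (nat \<Rightarrow> 'r set) \<Rightarrow> (nat \<Rightarrow> 'v \<Rightarrow> 'r \<Rightarrow> real)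
    \<Rightarrow> (nat \<Rightarrow> real) \<Rightarrow> (nat \<Rightarrow> nat) \<Rightarrow> (nat \<Rightarrow> 'a \<Rightarrow> nat \<Rightarrow> real) \<Rightarrow> real" where
  "objective M J L AX AS AV p AR d a n q =
     (\<Sum>i=J+1..M. a i * rate0 M J AX AS AV p n q i) +
     (\<Sum>l=1..L. a (M + l) * dist0 M J AX AS AV p n q AR d l)"

end

theory Submission
  imports Defs "HOL-Analysis.Analysis" "HOL-Real_Asymp.Real_Asymp"
begin

text \<open>
  Fix all test channels except the k-th one.  The proof rests on the observation that the
  objective, viewed as a function of the remaining channel \<open>q\<^sub>k : X\<^sub>k \<rightarrow> {0..<N}\<close>, has the form
  \<open>C + (\<Sum>z<N. F (\<lambda>x. q\<^sub>k x z))\<close>: a constant plus a sum over the output symbols of one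
  functional F of the corresponding column of the channel.  F only depends on the values of the
  column on \<open>X\<^sub>k\<close>, is positively homogeneous, and is continuous on \<open>[0,1]\<^bsup>X\<^sub>k\<^esub>\<close>.

  The second half verifies the decomposition for the concrete
  objective: the joint outcome space is split as (outcomes without \<open>Z\<^sub>k\<close>) \<times> (value of \<open>Z\<^sub>k\<close>),
  every conditional mutual information \<open>R\<^sup>0\<^sub>i\<close> is either independent of \<open>q\<^sub>k\<close> (i < k) or splits
  along \<open>Z\<^sub>k\<close> (i \<ge> k), and each minimal distortion \<open>D\<^sup>0\<^sub>l\<close> splits because an optimal decoder can
  be chosen separately for every value of \<open>Z\<^sub>k\<close>.
\<close>

section \<open>Continuity of the summands of mutual information\<close>

lemma continuous_on_x_ln_x: "continuous_on {0..} (\<lambda>q::real. q * ln q)"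
proof -
  have "continuous (at q within {0..}) (\<lambda>q::real. q * ln q)" if "q \<ge> 0" for q
  proof (cases "q = 0")
    case True
    have "((\<lambda>x::real. x * ln x) \<longlongrightarrow> 0) (at_right 0)" by real_asymp
    then show ?thesis using True by (simp add: continuous_within at_within_Ici_at_right)
  next
    case False
    then have "q > 0" using that by simp
    show ?thesis
      by (rule continuous_at_imp_continuous_at_within)
         (use \<open>q > 0\<close> in \<open>auto intro!: continuous_intros\<close>)
  qed
  then show ?thesis by (simp add: continuous_on_eq_continuous_within)
qed

text \<open>For \<open>0 \<le> p \<le> q < 1\<close> the term \<open>p ln q\<close> is dominated by \<open>q ln q\<close>; this controls
  \<open>p ln q\<close> near the origin.\<close>
lemma abs_mult_ln_le:
  fixes p q :: real
  assumes "0 \<le> p" "p \<le> q" "q < 1"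
  shows "\<bar>p * ln q\<bar> \<le> \<bar>q * ln q\<bar>"
proof (cases "p = 0")
  case False
  then have "q > 0" using assms by auto
  then have "ln q \<le> 0" using assms by simp
  then have "q * ln q \<le> p * ln q" using assms by (intro mult_right_mono_neg) auto
  moreover have "p * ln q \<le> 0" "q * ln q \<le> 0"
    using assms \<open>ln q \<le> 0\<close> by (auto intro: mult_nonneg_nonpos)
  ultimately show ?thesis by simp
qed simp

text \<open>The map \<open>(p, q) \<mapsto> p ln q\<close> is continuous on \<open>{0 \<le> p \<le> q}\<close>, including the corner
  \<open>(0, 0)\<close> where it takes the value 0.\<close>
lemma continuous_on_fst_ln_snd:
  "continuous_on {z::real\<times>real. 0 \<le> fst z \<and> fst z \<le> snd z} (\<lambda>z. fst z * ln (snd z))"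
proof -
  let ?D = "{z::real\<times>real. 0 \<le> fst z \<and> fst z \<le> snd z}"
  have "continuous (at z within ?D) (\<lambda>z. fst z * ln (snd z))" if "z \<in> ?D" for z
  proof (cases "snd z = 0")
    case False
    then have "snd z > 0" using that by auto
    show ?thesis
      by (rule continuous_at_imp_continuous_at_within)
         (use \<open>snd z > 0\<close> in \<open>auto intro!: continuous_intros\<close>)
  next
    case True
    then have z0: "z = (0, 0)" using that by (cases z) auto
    have "continuous_on ?D (\<lambda>z. snd z * ln (snd z))"
      by (rule continuous_on_compose2[OF continuous_on_x_ln_x, where f=snd])
         (auto intro: continuous_intros)
    then have "continuous (at z within ?D) (\<lambda>z. \<bar>snd z * ln (snd z)\<bar>)"
      using continuous_on_rabs that continuous_on_eq_continuous_within by blast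
    then have lim0: "((\<lambda>z. \<bar>snd z * ln (snd z)\<bar>) \<longlongrightarrow> 0) (at z within ?D)"
      using True by (simp add: continuous_within)
    have "eventually (\<lambda>w. snd w < 1) (at z within ?D)"
    proof -
      have "(snd \<longlongrightarrow> 0) (at z within ?D)"
        using True tendsto_snd[OF tendsto_ident_at, of z ?D] by simp
      then show ?thesis using order_tendstoD(2)[of snd 0 "at z within ?D" 1] by simp
    qed
    moreover have "eventually (\<lambda>w. w \<in> ?D) (at z within ?D)"
      by (simp add: eventually_at_filter)
    ultimately have "eventually (\<lambda>w. norm (fst w * ln (snd w)) \<le> \<bar>snd w * ln (snd w)\<bar>) (at z within ?D)"
    proof (rule eventually_mono[OF eventually_conj])
      fix w assume "snd w < 1 \<and> w \<in> ?D"
      then show "norm (fst w * ln (snd w)) \<le> \<bar>snd w * ln (snd w)\<bar>"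
        using abs_mult_ln_le[of "fst w" "snd w"] by simp
    qed
    then have "((\<lambda>w. fst w * ln (snd w)) \<longlongrightarrow> 0) (at z within ?D)"
      using lim0 by (rule Lim_null_comparison)
    then show ?thesis using z0 by (simp add: continuous_within)
  qed
  then show ?thesis by (simp add: continuous_on_eq_continuous_within)
qed

lemma continuous_on_mult_ln:
  fixes P Q :: "'a::topological_space \<Rightarrow> real"
  assumes "continuous_on S P" "continuous_on S Q" "\<And>s. s \<in> S \<Longrightarrow> 0 \<le> P s \<and> P s \<le> Q s"
  shows "continuous_on S (\<lambda>s. P s * ln (Q s))"
proof -
  have "continuous_on S (\<lambda>s. (\<lambda>z. fst z * ln (snd z)) (P s, Q s))"
    by (rule continuous_on_compose2[OF continuous_on_fst_ln_snd, where f="\<lambda>s. (P s, Q s)"])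
       (use assms in \<open>auto intro: continuous_intros\<close>)
  then show ?thesis by simp
qed

lemma mult_log_ratio_eq:
  fixes P Q1 Q2 Q3 Q4 :: real
  assumes "0 \<le> P" "P \<le> Q1" "P \<le> Q2" "P \<le> Q3" "P \<le> Q4"
  shows "P * log 2 (Q1 * Q2 / (Q3 * Q4)) = (P * ln Q1 + P * ln Q2 - P * ln Q3 - P * ln Q4) / ln 2"
proof (cases "P = 0")
  case False
  then have "Q1 > 0" "Q2 > 0" "Q3 > 0" "Q4 > 0" using assms by auto
  then show ?thesis
    by (simp add: log_def ln_mult ln_div algebra_simps diff_divide_distrib add_divide_distrib)
qed simp

lemma continuous_on_mult_log_ratio:
  fixes P Q1 Q2 Q3 Q4 :: "'a::topological_space \<Rightarrow> real"
  assumes "continuous_on S P" "continuous_on S Q1" "continuous_on S Q2"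
    "continuous_on S Q3" "continuous_on S Q4"
    and dom: "\<And>s. s \<in> S \<Longrightarrow> 0 \<le> P s \<and> P s \<le> Q1 s \<and> P s \<le> Q2 s \<and> P s \<le> Q3 s \<and> P s \<le> Q4 s"
  shows "continuous_on S (\<lambda>s. P s * log 2 (Q1 s * Q2 s / (Q3 s * Q4 s)))"
proof -
  have "continuous_on S
      (\<lambda>s. (P s * ln (Q1 s) + P s * ln (Q2 s) - P s * ln (Q3 s) - P s * ln (Q4 s)) / ln 2)"
    using assms by (intro continuous_intros continuous_on_mult_ln) auto
  then show ?thesis
    by (rule continuous_on_cong[THEN iffD1, rotated 2]) (use dom mult_log_ratio_eq in auto)
qed


section \<open>Reducing the support of a nonnegative solution of a linear system\<close>

lemma homogeneous_system_nontrivial_solution: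
  fixes c :: "'z \<Rightarrow> 'x \<Rightarrow> real"
  assumes "finite X" "finite Z" "card X < card Z"
  shows "\<exists>\<mu>. (\<exists>z\<in>Z. \<mu> z \<noteq> 0) \<and> (\<forall>x\<in>X. (\<Sum>z\<in>Z. \<mu> z * c z x) = 0)"
  using assms
proof (induction X arbitrary: Z c rule: finite_induct)
  case empty
  then obtain z where "z \<in> Z" by (metis card.empty card_gt_0_iff ex_in_conv)
  then show ?case by (intro exI[of _ "\<lambda>_. 1"]) auto
next
  case (insert x0 X')
  have cX: "card (insert x0 X') = card X' + 1" using insert by simp
  show ?case
  proof (cases "\<forall>z\<in>Z. c z x0 = 0")
    case True
    obtain \<mu> where \<mu>: "\<exists>z\<in>Z. \<mu> z \<noteq> 0" "\<forall>x\<in>X'. (\<Sum>z\<in>Z. \<mu> z * c z x) = 0"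
      using insert.IH[of Z c] insert.prems cX by auto
    show ?thesis using \<mu> True by (intro exI[of _ \<mu>]) auto
  next
    case False
    text \<open>Eliminate the unknown \<open>z0\<close> using the equation \<open>x0\<close> and recurse on the rest.\<close>
    then obtain z0 where z0: "z0 \<in> Z" "c z0 x0 \<noteq> 0" by auto
    define Z' where "Z' = Z - {z0}"
    define c' where "c' = (\<lambda>z x. c z x - c z x0 / c z0 x0 * c z0 x)"
    have "finite Z'" "card X' < card Z'"
      using z0 insert.prems cX by (simp_all add: Z'_def card_Diff_singleton)
    then obtain \<mu>' where \<mu>': "\<exists>z\<in>Z'. \<mu>' z \<noteq> 0" "\<forall>x\<in>X'. (\<Sum>z\<in>Z'. \<mu>' z * c' z x) = 0"
      using insert.IH by blast
    have reduced: "(\<Sum>z\<in>Z'. \<mu>' z * c' z x) = 0" if "x \<in> insert x0 X'" for x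
      using that \<mu>' z0 by (cases "x = x0") (auto simp: c'_def)
    define \<mu> where "\<mu> = \<mu>'(z0 := - (\<Sum>z\<in>Z'. \<mu>' z * c z x0) / c z0 x0)"
    have "(\<Sum>z\<in>Z. \<mu> z * c z x) = 0" if "x \<in> insert x0 X'" for x
    proof -
      have "(\<Sum>z\<in>Z. \<mu> z * c z x) = \<mu> z0 * c z0 x + (\<Sum>z\<in>Z'. \<mu> z * c z x)"
        using z0 insert.prems Z'_def by (simp add: sum.remove)
      also have "(\<Sum>z\<in>Z'. \<mu> z * c z x) = (\<Sum>z\<in>Z'. \<mu>' z * c z x)"
        by (rule sum.cong) (auto simp: \<mu>_def Z'_def)
      also have "\<mu> z0 * c z0 x + (\<Sum>z\<in>Z'. \<mu>' z * c z x) = (\<Sum>z\<in>Z'. \<mu>' z * c' z x)"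
        by (simp add: \<mu>_def c'_def algebra_simps sum_subtractf sum_distrib_left
            sum_distrib_right sum_divide_distrib)
      finally show ?thesis using reduced[OF that] by simp
    qed
    moreover have "\<exists>z\<in>Z. \<mu> z \<noteq> 0" using \<mu>' by (auto simp: \<mu>_def Z'_def)
    ultimately show ?thesis by blast
  qed
qed

definition feasible_weights :: "'x set \<Rightarrow> ('z \<Rightarrow> 'x \<Rightarrow> real) \<Rightarrow> 'z set \<Rightarrow> ('z \<Rightarrow> real) \<Rightarrow> bool"
  where "feasible_weights X c S l \<longleftrightarrow> (\<forall>z\<in>S. 0 \<le> l z) \<and> (\<forall>x\<in>X. (\<Sum>z\<in>S. l z * c z x) = 1)"

lemma feasible_weights_drop_null:
  assumes "finite S" "z0 \<in> S" "\<forall>x\<in>X. c z0 x = 0" "f z0 = 0" "feasible_weights X c S l"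
  shows "feasible_weights X c (S - {z0}) l \<and> (\<Sum>z\<in>S - {z0}. l z * f z) = (\<Sum>z\<in>S. l z * f z)"
  using assms by (auto simp: feasible_weights_def sum.remove)

text \<open>The ratio test of the simplex method: moving along a direction \<open>\<nu>\<close> of the kernel that
  does not increase the cost and has a negative entry, until the first weight becomes 0.\<close>
lemma feasible_weights_ratio_step:
  assumes S: "finite S" and feas: "feasible_weights X c S l"
    and ker: "\<forall>x\<in>X. (\<Sum>z\<in>S. \<nu> z * c z x) = 0" and cost: "(\<Sum>z\<in>S. \<nu> z * f z) \<le> 0"
    and neg: "\<exists>z\<in>S. \<nu> z < 0"
  shows "\<exists>zs\<in>S. \<exists>l'. feasible_weights X c (S - {zs}) l' \<and>
           (\<Sum>z\<in>S - {zs}. l' z * f z) \<le> (\<Sum>z\<in>S. l z * f z)"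
proof -
  define NS where "NS = {z\<in>S. \<nu> z < 0}"
  have fNS: "finite NS" "NS \<noteq> {}" using neg S by (auto simp: NS_def)
  define t where "t = Min ((\<lambda>z. l z / (- \<nu> z)) ` NS)"
  have "t \<in> (\<lambda>z. l z / (- \<nu> z)) ` NS" unfolding t_def using fNS by (intro Min_in) auto
  then obtain zs where zs: "zs \<in> NS" "t = l zs / (- \<nu> zs)" by blast
  have t_le: "t \<le> l z / (- \<nu> z)" if "z \<in> NS" for z
    unfolding t_def using fNS that by auto
  have t0: "0 \<le> t" using zs feas by (auto simp: NS_def feasible_weights_def intro!: divide_nonneg_neg)
  define l' where "l' = (\<lambda>z. l z + t * \<nu> z)"
  have l'_nonneg: "0 \<le> l' z" if "z \<in> S" for z
  proof (cases "\<nu> z < 0")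
    case True
    then have "t * (- \<nu> z) \<le> l z"
      using t_le that pos_le_divide_eq[of "- \<nu> z" t "l z"] by (auto simp: NS_def)
    then show ?thesis by (simp add: l'_def)
  next
    case False
    then show ?thesis using t0 feas that by (simp add: l'_def feasible_weights_def)
  qed
  have zsS: "zs \<in> S" and l'_zs: "l' zs = 0" using zs by (auto simp: l'_def NS_def)
  have drop: "(\<Sum>z\<in>S - {zs}. l' z * g z) = (\<Sum>z\<in>S. l z * g z) + t * (\<Sum>z\<in>S. \<nu> z * g z)" for g
  proof -
    have "(\<Sum>z\<in>S - {zs}. l' z * g z) = (\<Sum>z\<in>S. l' z * g z)"
      using zsS l'_zs S by (simp add: sum.remove)
    then show ?thesis by (simp add: l'_def algebra_simps sum.distrib sum_distrib_left)
  qed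
  have "feasible_weights X c (S - {zs}) l'"
    using l'_nonneg feas ker by (auto simp: feasible_weights_def drop)
  moreover have "(\<Sum>z\<in>S - {zs}. l' z * f z) \<le> (\<Sum>z\<in>S. l z * f z)"
    using t0 cost by (simp add: drop mult_nonneg_nonpos)
  ultimately show ?thesis using zsS by blast
qed

lemma feasible_weights_reduce_step:
  assumes X: "finite X" and S: "finite S" "card X < card S"
    and c_nonneg: "\<forall>z. \<forall>x\<in>X. 0 \<le> c z x" and null_cost: "\<forall>z. (\<forall>x\<in>X. c z x = 0) \<longrightarrow> f z = 0"
    and feas: "feasible_weights X c S l"
  shows "\<exists>zs\<in>S. \<exists>l'. feasible_weights X c (S - {zs}) l' \<and>
           (\<Sum>z\<in>S - {zs}. l' z * f z) \<le> (\<Sum>z\<in>S. l z * f z)"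
proof -
  obtain \<mu> where \<mu>: "\<exists>z\<in>S. \<mu> z \<noteq> 0" "\<forall>x\<in>X. (\<Sum>z\<in>S. \<mu> z * c z x) = 0"
    using homogeneous_system_nontrivial_solution[OF X S] by blast
  define \<nu> where "\<nu> = (if (\<Sum>z\<in>S. \<mu> z * f z) \<le> 0 then \<mu> else (\<lambda>z. - \<mu> z))"
  have \<nu>: "\<exists>z\<in>S. \<nu> z \<noteq> 0" "\<forall>x\<in>X. (\<Sum>z\<in>S. \<nu> z * c z x) = 0" "(\<Sum>z\<in>S. \<nu> z * f z) \<le> 0"
    using \<mu> by (auto simp: \<nu>_def sum_negf)
  show ?thesis
  proof (cases "\<exists>z\<in>S. \<nu> z < 0")
    case True
    then show ?thesis using feasible_weights_ratio_step[OF S(1) feas \<nu>(2,3)] by blast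
  next
    case False
    text \<open>A nonnegative kernel vector of nonnegative columns is supported on null columns.\<close>
    then obtain z0 where z0: "z0 \<in> S" "\<nu> z0 > 0" using \<nu>(1) by force
    have "\<nu> z0 * c z0 x = 0" if "x \<in> X" for x
      using sum_nonneg_eq_0_iff[OF S(1), of "\<lambda>z. \<nu> z * c z x"] \<nu>(2) that False c_nonneg z0
      by (auto simp: not_less)
    then have "\<forall>x\<in>X. c z0 x = 0" using z0 by simp
    then show ?thesis
      using feasible_weights_drop_null[OF S(1) z0(1) _ _ feas] null_cost z0(1)
      by (metis order_refl)
  qed
qed

text \<open>Carath\'eodory-type reduction: a feasible solution can be replaced by one supported on at
  most \<open>card X\<close> indices and of no larger cost.\<close>
lemma feasible_weights_reduce:
  assumes X: "finite X"
    and c_nonneg: "\<forall>z. \<forall>x\<in>X. 0 \<le> c z x" and null_cost: "\<forall>z. (\<forall>x\<in>X. c z x = 0) \<longrightarrow> f z = 0"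
  shows "finite S \<Longrightarrow> feasible_weights X c S l \<Longrightarrow>
    \<exists>T l'. T \<subseteq> S \<and> card T \<le> card X \<and> feasible_weights X c T l' \<and>
       (\<Sum>z\<in>T. l' z * f z) \<le> (\<Sum>z\<in>S. l z * f z)"
proof (induction "card S" arbitrary: S l rule: less_induct)
  case less
  show ?case
  proof (cases "card S \<le> card X")
    case True
    then show ?thesis using less.prems by blast
  next
    case False
    then obtain zs l' where zs: "zs \<in> S" "feasible_weights X c (S - {zs}) l'"
        "(\<Sum>z\<in>S - {zs}. l' z * f z) \<le> (\<Sum>z\<in>S. l z * f z)"
      using feasible_weights_reduce_step[OF X less.prems(1) _ c_nonneg null_cost less.prems(2)]
      by (meson not_le)
    have "card (S - {zs}) < card S" by (rule card_Diff1_less[OF less.prems(1) zs(1)])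
    then obtain T l'' where "T \<subseteq> S - {zs}" "card T \<le> card X" "feasible_weights X c T l''"
        "(\<Sum>z\<in>T. l'' z * f z) \<le> (\<Sum>z\<in>S - {zs}. l' z * f z)"
      using less.hyps less.prems(1) zs(2) by (meson finite_Diff)
    then show ?thesis using zs(3) by (meson Diff_subset order_trans subset_trans)
  qed
qed

section \<open>Minimising column-additive costs over channels\<close>

definition column_functional :: "'x set \<Rightarrow> (('x \<Rightarrow> real) \<Rightarrow> real) \<Rightarrow> bool" where
  "column_functional X F \<longleftrightarrow>
     (\<forall>c c'. (\<forall>x\<in>X. c x = c' x) \<longrightarrow> F c = F c') \<and> (\<forall>c t. 0 \<le> t \<longrightarrow> F (\<lambda>x. t * c x) = t * F c)"

lemma column_functionalI:
  assumes "\<And>c c'. (\<forall>x\<in>X. c x = c' x) \<Longrightarrow> F c = F c'"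
    and "\<And>c t. 0 \<le> t \<Longrightarrow> F (\<lambda>x. t * c x) = t * F c"
  shows "column_functional X F"
  using assms by (simp add: column_functional_def)

lemma column_functional_local:
  "column_functional X F \<Longrightarrow> (\<forall>x\<in>X. c x = c' x) \<Longrightarrow> F c = F c'"
  by (simp add: column_functional_def)

lemma column_functional_homogeneous:
  "column_functional X F \<Longrightarrow> 0 \<le> t \<Longrightarrow> F (\<lambda>x. t * c x) = t * F c"
  by (simp add: column_functional_def)

lemma column_functional_zero: "column_functional X F \<Longrightarrow> F (\<lambda>x. 0) = 0"
  using column_functional_homogeneous[of X F 0 "\<lambda>x. 0"] by simp

lemma column_functional_const_zero: "column_functional X (\<lambda>c. 0)"
  by (simp add: column_functional_def)

lemma column_functional_add:
  assumes "column_functional X F" "column_functional X G"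
  shows "column_functional X (\<lambda>c. F c + G c)"
proof (rule column_functionalI)
  show "F c + G c = F c' + G c'" if "\<forall>x\<in>X. c x = c' x" for c c'
    using column_functional_local[OF assms(1) that] column_functional_local[OF assms(2) that] by simp
  show "F (\<lambda>x. t * c x) + G (\<lambda>x. t * c x) = t * (F c + G c)" if "0 \<le> t" for c t
    using column_functional_homogeneous[OF assms(1) that] column_functional_homogeneous[OF assms(2) that]
    by (simp add: distrib_left)
qed

lemma column_functional_lincomb:
  assumes "\<And>i. i \<in> I \<Longrightarrow> column_functional X (F i)"
  shows "column_functional X (\<lambda>c. \<Sum>i\<in>I. a i * F i c)"
proof (rule column_functionalI)
  show "(\<Sum>i\<in>I. a i * F i c) = (\<Sum>i\<in>I. a i * F i c')" if eq: "\<forall>x\<in>X. c x = c' x" for c c'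
    using column_functional_local[OF assms eq] by simp
  show "(\<Sum>i\<in>I. a i * F i (\<lambda>x. t * c x)) = t * (\<Sum>i\<in>I. a i * F i c)" if "0 \<le> t" for c t
    using column_functional_homogeneous[OF assms that]
    by (simp add: sum_distrib_left mult.left_commute)
qed

definition channel_cost :: "(('x \<Rightarrow> real) \<Rightarrow> real) \<Rightarrow> nat \<Rightarrow> ('x \<Rightarrow> nat \<Rightarrow> real) \<Rightarrow> real" where
  "channel_cost F N q = (\<Sum>z<N. F (\<lambda>x. q x z))"

text \<open>Channels with m outputs, normalised to vanish outside \<open>X \<times> {..<m}\<close>; as a set of functions
  this is compact.\<close>
definition channels_on :: "'x set \<Rightarrow> nat \<Rightarrow> ('x \<Rightarrow> nat \<Rightarrow> real) set" where
  "channels_on X m = {q. is_channel X m q \<and> (\<forall>x z. x \<notin> X \<or> m \<le> z \<longrightarrow> q x z = 0)}"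

lemma is_channel_le_1:
  assumes "is_channel X N q" "x \<in> X" "z < N"
  shows "q x z \<le> 1"
proof -
  have "q x z \<le> (\<Sum>z<N. q x z)"
    using assms by (intro member_le_sum) (auto simp: is_channel_def)
  then show ?thesis using assms by (simp add: is_channel_def)
qed

lemma channel_of_feasible_weights:
  assumes F: "column_functional X F" and T: "finite T" "card T \<le> m"
    and feas: "feasible_weights X c T l" and c_nonneg: "\<forall>z. \<forall>x\<in>X. 0 \<le> c z x"
  shows "\<exists>q\<in>channels_on X m. channel_cost F m q = (\<Sum>z\<in>T. l z * F (c z))"
proof -
  obtain e where e: "bij_betw e {0..<card T} T" using ex_bij_betw_nat_finite[OF T(1)] by blast
  define q where "q = (\<lambda>x j. if x \<in> X \<and> j < card T then l (e j) * c (e j) x else 0)"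
  have eT: "e j \<in> T" if "j < card T" for j using e that by (auto simp: bij_betw_def)
  have split: "{..<m} = {..<card T} \<union> {card T..<m}" using T(2) by auto
  have trunc: "(\<Sum>j<m. g j) = (\<Sum>j\<in>{0..<card T}. g j)" if "\<And>j. card T \<le> j \<Longrightarrow> g j = 0" for g
    using that by (subst split, subst sum.union_disjoint) (auto intro!: sum.cong)
  have "(\<Sum>j<m. q x j) = 1" if "x \<in> X" for x
  proof -
    have "(\<Sum>j<m. q x j) = (\<Sum>j\<in>{0..<card T}. l (e j) * c (e j) x)"
      using that by (subst trunc) (auto simp: q_def)
    also have "\<dots> = (\<Sum>z\<in>T. l z * c z x)" by (rule sum.reindex_bij_betw[OF e])
    finally show ?thesis using feas that by (simp add: feasible_weights_def)
  qed
  moreover have "0 \<le> q x j" if "x \<in> X" for x j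
    using that feas c_nonneg eT by (auto simp: q_def feasible_weights_def)
  ultimately have q: "q \<in> channels_on X m"
    using T(2) by (auto simp: channels_on_def is_channel_def q_def)
  have "channel_cost F m q = (\<Sum>j\<in>{0..<card T}. F (\<lambda>x. q x j))"
    unfolding channel_cost_def
    by (rule trunc) (use column_functional_zero[OF F] in \<open>simp add: q_def\<close>)
  also have "\<dots> = (\<Sum>j\<in>{0..<card T}. l (e j) * F (c (e j)))"
  proof (rule sum.cong)
    fix j assume j: "j \<in> {0..<card T}"
    have "F (\<lambda>x. q x j) = F (\<lambda>x. l (e j) * c (e j) x)"
      using j by (intro column_functional_local[OF F]) (simp add: q_def)
    also have "\<dots> = l (e j) * F (c (e j))"
      using column_functional_homogeneous[OF F] feas eT j by (auto simp: feasible_weights_def)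
    finally show "F (\<lambda>x. q x j) = l (e j) * F (c (e j))" .
  qed simp
  also have "\<dots> = (\<Sum>z\<in>T. l z * F (c z))" by (rule sum.reindex_bij_betw[OF e])
  finally show ?thesis using q by blast
qed

lemma channel_reduce:
  assumes X: "finite X" and F: "column_functional X F" and ch: "is_channel X N q'"
  shows "\<exists>q\<in>channels_on X (card X). channel_cost F (card X) q \<le> channel_cost F N q'"
proof -
  define c where "c = (\<lambda>z x. if x \<in> X \<and> z < N then q' x z else 0)"
  have c_nonneg: "\<forall>z. \<forall>x\<in>X. 0 \<le> c z x" using ch by (auto simp: c_def is_channel_def)
  have null_cost: "\<forall>z. (\<forall>x\<in>X. c z x = 0) \<longrightarrow> F (c z) = 0"
    using column_functional_local[OF F] column_functional_zero[OF F] by metis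
  have "feasible_weights X c {..<N} (\<lambda>_. 1)"
    using ch by (auto simp: feasible_weights_def c_def is_channel_def)
  then obtain T l where T: "T \<subseteq> {..<N}" "card T \<le> card X" "feasible_weights X c T l"
      "(\<Sum>z\<in>T. l z * F (c z)) \<le> (\<Sum>z<N. 1 * F (c z))"
    using feasible_weights_reduce[OF X c_nonneg null_cost, of "{..<N}"] by blast
  obtain q where q: "q \<in> channels_on X (card X)" "channel_cost F (card X) q = (\<Sum>z\<in>T. l z * F (c z))"
    using channel_of_feasible_weights[OF F _ T(2,3) c_nonneg] T(1) finite_subset by blast
  have "(\<Sum>z<N. F (c z)) = channel_cost F N q'"
    unfolding channel_cost_def
    by (intro sum.cong refl column_functional_local[OF F]) (simp add: c_def)
  then show ?thesis using q T(4) by (intro bexI[of _ q]) simp_all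
qed

lemma continuous_on_apply [continuous_intros]:
  "continuous_on S (\<lambda>f::'a \<Rightarrow> 'b::topological_space. f a)"
  by (rule continuous_on_subset[OF continuous_on_product_coordinates]) auto

lemma continuous_on_apply2:
  "continuous_on S (\<lambda>f::'a \<Rightarrow> 'c \<Rightarrow> 'b::topological_space. f a b)"
  by (rule continuous_on_product_then_coordinatewise[OF continuous_on_apply])

lemma compact_Pi_UNIV:
  fixes S :: "'i \<Rightarrow> 'b::topological_space set"
  assumes "\<And>i. compact (S i)"
  shows "compact (Pi UNIV S)"
proof -
  have "compactin (product_topology (\<lambda>i. euclidean) UNIV) (PiE UNIV S)"
    using assms by (subst compactin_PiE) auto
  then show ?thesis by (simp add: euclidean_product_topology PiE_UNIV_domain)
qed

text \<open>The normalised channels form a closed subset of a product of compact intervals.\<close>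
lemma compact_channels_on: "compact (channels_on X m)"
proof -
  define B where "B = (\<lambda>x z. if x \<in> X \<and> z < m then {0..1::real} else {0})"
  have eq: "channels_on X m = Pi UNIV (\<lambda>x. Pi UNIV (B x)) \<inter> (\<Inter>x\<in>X. {q. (\<Sum>z<m. q x z) = 1})"
  proof (intro set_eqI iffI)
    fix q assume "q \<in> channels_on X m"
    then show "q \<in> Pi UNIV (\<lambda>x. Pi UNIV (B x)) \<inter> (\<Inter>x\<in>X. {q. (\<Sum>z<m. q x z) = 1})"
      using is_channel_le_1[of X m q] by (auto simp: channels_on_def B_def is_channel_def)
  next
    fix q assume "q \<in> Pi UNIV (\<lambda>x. Pi UNIV (B x)) \<inter> (\<Inter>x\<in>X. {q. (\<Sum>z<m. q x z) = 1})"
    then show "q \<in> channels_on X m" unfolding channels_on_def B_def is_channel_def Pi_def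
      by (auto split: if_splits) (metis (no_types) empty_iff insert_iff not_le)
  qed
  have "compact (Pi UNIV (\<lambda>x. Pi UNIV (B x)))"
    by (intro compact_Pi_UNIV) (auto simp: B_def)
  moreover have "closed {q :: 'a \<Rightarrow> nat \<Rightarrow> real. (\<Sum>z<m. q x z) = 1}" for x
    by (intro closed_Collect_eq continuous_on_sum continuous_on_apply2 continuous_on_const)
  ultimately show ?thesis unfolding eq by (intro compact_Int_closed closed_INT) auto
qed

theorem channel_cost_minimum:
  assumes X: "finite X" "X \<noteq> {}" and F: "column_functional X F"
    and cont: "continuous_on {c. \<forall>x\<in>X. 0 \<le> c x \<and> c x \<le> 1} F"
  shows "\<exists>N q. is_channel X N q \<and> N \<le> card X \<and>
    (\<forall>N' q'. is_channel X N' q' \<longrightarrow> channel_cost F N q \<le> channel_cost F N' q')"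
proof -
  let ?K = "channels_on X (card X)"
  define q0 where "q0 = (\<lambda>x (z::nat). if x \<in> X \<and> z = 0 then 1 else (0::real))"
  have "q0 \<in> ?K" using X by (auto simp: channels_on_def q0_def is_channel_def card_gt_0_iff)
  then have K_ne: "?K \<noteq> {}" by auto
  have "continuous_on ?K (channel_cost F (card X))"
    unfolding channel_cost_def
  proof (intro continuous_on_sum)
    fix z assume z: "z \<in> {..<card X}"
    have "(\<lambda>q. (\<lambda>x. q x z)) ` ?K \<subseteq> {c. \<forall>x\<in>X. 0 \<le> c x \<and> c x \<le> 1}"
      using z is_channel_le_1 by (auto simp: channels_on_def is_channel_def)
    then show "continuous_on ?K (\<lambda>q. F (\<lambda>x. q x z))"
      by (intro continuous_on_compose2[OF cont] continuous_on_coordinatewise_then_product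
          continuous_on_apply2)
  qed
  then obtain qs where qs: "qs \<in> ?K" "\<forall>q\<in>?K. channel_cost F (card X) qs \<le> channel_cost F (card X) q"
    using continuous_attains_inf[OF compact_channels_on K_ne] by blast
  have "channel_cost F (card X) qs \<le> channel_cost F N' q'" if "is_channel X N' q'" for N' q'
    using channel_reduce[OF X(1) F that] qs(2) by force
  then show ?thesis using qs(1) by (auto simp: channels_on_def)
qed

section \<open>Splitting off the output of the k-th test channel\<close>

definition var_x :: "nat \<Rightarrow> ((nat \<Rightarrow> 'a) \<times> 's \<times> 'v) \<times> (nat \<Rightarrow> nat) \<Rightarrow> 'a" where
  "var_x i = (\<lambda>((x, s, v), z). x i)"

definition var_z :: "nat \<Rightarrow> ((nat \<Rightarrow> 'a) \<times> 's \<times> 'v) \<times> (nat \<Rightarrow> nat) \<Rightarrow> nat" where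
  "var_z i = (\<lambda>((x, s, v), z). z i)"

definition var_v :: "((nat \<Rightarrow> 'a) \<times> 's \<times> 'v) \<times> (nat \<Rightarrow> nat) \<Rightarrow> 'v" where
  "var_v = (\<lambda>((x, s, v), z). v)"

definition var_cond :: "nat \<Rightarrow> nat \<Rightarrow> ((nat \<Rightarrow> 'a) \<times> 's \<times> 'v) \<times> (nat \<Rightarrow> nat)
    \<Rightarrow> (nat \<Rightarrow> 'a) \<times> (nat \<Rightarrow> nat) \<times> 's" where
  "var_cond J i = (\<lambda>((x, s, v), z). (restrict x {1..J}, restrict z {J+1..<i}, s))"

definition var_obs :: "nat \<Rightarrow> nat \<Rightarrow> ((nat \<Rightarrow> 'a) \<times> 's \<times> 'v) \<times> (nat \<Rightarrow> nat)
    \<Rightarrow> (nat \<Rightarrow> 'a) \<times> (nat \<Rightarrow> nat) \<times> 's" where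
  "var_obs M J = (\<lambda>((x, s, v), z). (restrict x {1..J}, restrict z {J+1..M}, s))"

lemma rate0_eq_cond_mutual_info:
  "rate0 M J AX AS AV p n q i =
     cond_mutual_info (joint_space M J AX AS AV n) (joint_pmf M J p q) (var_x i) (var_z i) (var_cond J i)"
  unfolding rate0_def var_x_def var_z_def var_cond_def ..

definition reduced_space :: "nat \<Rightarrow> nat \<Rightarrow> nat \<Rightarrow> (nat \<Rightarrow> 'a set) \<Rightarrow> 's set \<Rightarrow> 'v set \<Rightarrow> (nat \<Rightarrow> nat)
    \<Rightarrow> (((nat \<Rightarrow> 'a) \<times> 's \<times> 'v) \<times> (nat \<Rightarrow> nat)) set" where
  "reduced_space M J k AX AS AV n = src_space M AX AS AV \<times> PiE ({J+1..M} - {k}) (\<lambda>\<kappa>. {0..<n \<kappa>})"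

definition reduced_pmf :: "nat \<Rightarrow> nat \<Rightarrow> nat \<Rightarrow> ((nat \<Rightarrow> 'a) \<times> 's \<times> 'v \<Rightarrow> real)
    \<Rightarrow> (nat \<Rightarrow> 'a \<Rightarrow> nat \<Rightarrow> real) \<Rightarrow> ((nat \<Rightarrow> 'a) \<times> 's \<times> 'v) \<times> (nat \<Rightarrow> nat) \<Rightarrow> real" where
  "reduced_pmf M J k p q = (\<lambda>((x, s, v), z). p (x, s, v) * (\<Prod>\<kappa>\<in>{J+1..M} - {k}. q \<kappa> (x \<kappa>) (z \<kappa>)))"

definition insert_z :: "nat \<Rightarrow> (((nat \<Rightarrow> 'a) \<times> 's \<times> 'v) \<times> (nat \<Rightarrow> nat)) \<times> nat
    \<Rightarrow> ((nat \<Rightarrow> 'a) \<times> 's \<times> 'v) \<times> (nat \<Rightarrow> nat)" where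
  "insert_z k = (\<lambda>(u, b). (fst u, (snd u)(k := b)))"

lemma reduced_space_undefined:
  "u \<in> reduced_space M J k AX AS AV n \<Longrightarrow> snd u k = undefined"
  by (auto simp: reduced_space_def PiE_def extensional_def)

lemma finite_reduced_space:
  assumes "\<forall>i\<in>{1..M}. finite (AX i)" "finite AS" "finite AV"
  shows "finite (reduced_space M J k AX AS AV n)"
  unfolding reduced_space_def src_space_def
  using assms by (intro finite_cartesian_product finite_PiE) auto

lemma var_x_reduced_space:
  "k \<in> {1..M} \<Longrightarrow> var_x k ` reduced_space M J k AX AS AV n \<subseteq> AX k"
  by (auto simp: reduced_space_def var_x_def src_space_def PiE_iff)

lemma reduced_pmf_nonneg:
  assumes p: "\<forall>w\<in>src_space M AX AS AV. 0 \<le> p w"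
    and q: "\<forall>\<kappa>\<in>{J+1..M} - {k}. is_channel (AX \<kappa>) (n \<kappa>) (q \<kappa>)"
    and u: "u \<in> reduced_space M J k AX AS AV n"
  shows "0 \<le> reduced_pmf M J k p q u"
proof -
  obtain x s v z where u_eq: "u = ((x, s, v), z)" by (metis prod.collapse)
  have xs: "(x, s, v) \<in> src_space M AX AS AV" and z: "z \<in> PiE ({J+1..M} - {k}) (\<lambda>\<kappa>. {0..<n \<kappa>})"
    using u u_eq by (auto simp: reduced_space_def)
  have "0 \<le> q \<kappa> (x \<kappa>) (z \<kappa>)" if \<kappa>: "\<kappa> \<in> {J+1..M} - {k}" for \<kappa>
  proof -
    have "x \<kappa> \<in> AX \<kappa>" using xs \<kappa> by (auto simp: src_space_def PiE_iff)
    moreover have "z \<kappa> < n \<kappa>" using PiE_mem[OF z \<kappa>] by simp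
    ultimately show ?thesis using q \<kappa> by (auto simp: is_channel_def)
  qed
  then have "0 \<le> (\<Prod>\<kappa>\<in>{J+1..M} - {k}. q \<kappa> (x \<kappa>) (z \<kappa>))" by (rule prod_nonneg)
  then show ?thesis using p xs u_eq by (simp add: reduced_pmf_def)
qed

lemma inj_on_insert_z: "inj_on (insert_z k) (reduced_space M J k AX AS AV n \<times> {..<N})"
proof (rule inj_onI)
  fix w w' assume w: "w \<in> reduced_space M J k AX AS AV n \<times> {..<N}"
    and w': "w' \<in> reduced_space M J k AX AS AV n \<times> {..<N}" and eq: "insert_z k w = insert_z k w'"
  obtain X z b X' z' b' where w_eq: "w = ((X, z), b)" and w'_eq: "w' = ((X', z'), b')"
    by (metis prod.collapse)
  have zk: "z k = undefined" "z' k = undefined"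
    using w w' w_eq w'_eq by (auto dest: reduced_space_undefined)
  have eq': "X = X'" "z(k := b) = z'(k := b')" using eq w_eq w'_eq by (auto simp: insert_z_def)
  have "b = b'" using fun_cong[OF eq'(2), of k] by simp
  moreover have "z = z'"
  proof
    fix j show "z j = z' j" using fun_cong[OF eq'(2), of j] zk by (cases "j = k") auto
  qed
  ultimately show "w = w'" using w_eq w'_eq eq'(1) by simp
qed

lemma image_insert_z:
  assumes k: "k \<in> {J+1..M}"
  shows "insert_z k ` (reduced_space M J k AX AS AV n \<times> {..<N}) = joint_space M J AX AS AV (n(k := N))"
proof (intro set_eqI iffI)
  fix y assume "y \<in> insert_z k ` (reduced_space M J k AX AS AV n \<times> {..<N})"
  then obtain X z b where "X \<in> src_space M AX AS AV" "z \<in> PiE ({J+1..M} - {k}) (\<lambda>\<kappa>. {0..<n \<kappa>})"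
    "b < N" and y: "y = (X, z(k := b))"
    by (auto simp: reduced_space_def insert_z_def)
  then show "y \<in> joint_space M J AX AS AV (n(k := N))"
    using k by (auto simp: joint_space_def PiE_iff extensional_def)
next
  fix y assume y: "y \<in> joint_space M J AX AS AV (n(k := N))"
  obtain X z where y_eq: "y = (X, z)" by (metis prod.collapse)
  have X: "X \<in> src_space M AX AS AV" and z: "z \<in> PiE {J+1..M} (\<lambda>\<kappa>. {0..<(n(k := N)) \<kappa>})"
    using y y_eq by (auto simp: joint_space_def)
  have "z(k := undefined) \<in> PiE ({J+1..M} - {k}) (\<lambda>\<kappa>. {0..<n \<kappa>})"
  proof (rule PiE_I)
    fix i assume "i \<in> {J+1..M} - {k}"
    then have i: "i \<in> {J+1..M}" "i \<noteq> k" by auto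
    have "z i \<in> {0..<(n(k := N)) i}" using PiE_mem[OF z i(1)] .
    then show "(z(k := undefined)) i \<in> {0..<n i}" using i(2) by simp
  next
    fix i assume "i \<notin> {J+1..M} - {k}"
    then show "(z(k := undefined)) i = undefined" using z by (cases "i = k") (auto simp: PiE_iff extensional_def)
  qed
  moreover have "z k < N" using PiE_mem[OF z k] by simp
  moreover have "insert_z k ((X, z(k := undefined)), z k) = y" using y_eq by (simp add: insert_z_def)
  ultimately show "y \<in> insert_z k ` (reduced_space M J k AX AS AV n \<times> {..<N})"
    using X by (force simp: reduced_space_def)
qed

lemma bij_insert_z:
  "k \<in> {J+1..M} \<Longrightarrow>
   bij_betw (insert_z k) (reduced_space M J k AX AS AV n \<times> {..<N}) (joint_space M J AX AS AV (n(k := N)))"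
  by (simp add: bij_betw_def inj_on_insert_z image_insert_z)

lemma joint_pmf_insert_z:
  assumes k: "k \<in> {J+1..M}"
  shows "joint_pmf M J p (q(k := qk)) (insert_z k w) = reduced_pmf M J k p q (fst w) * qk (var_x k (fst w)) (snd w)"
proof -
  obtain x s v z b where w_eq: "w = (((x, s, v), z), b)" by (metis prod.collapse)
  have "(\<Prod>\<kappa>\<in>{J+1..M}. (q(k := qk)) \<kappa> (x \<kappa>) ((z(k := b)) \<kappa>))
      = qk (x k) b * (\<Prod>\<kappa>\<in>{J+1..M} - {k}. (q(k := qk)) \<kappa> (x \<kappa>) ((z(k := b)) \<kappa>))"
    using k by (simp add: prod.remove)
  also have "(\<Prod>\<kappa>\<in>{J+1..M} - {k}. (q(k := qk)) \<kappa> (x \<kappa>) ((z(k := b)) \<kappa>))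
      = (\<Prod>\<kappa>\<in>{J+1..M} - {k}. q \<kappa> (x \<kappa>) (z \<kappa>))"
    by (intro prod.cong) auto
  finally show ?thesis
    using w_eq by (simp add: joint_pmf_def insert_z_def reduced_pmf_def var_x_def algebra_simps)
qed

section \<open>Conditional mutual information after adjoining a channel output\<close>

definition extend_pmf :: "('u \<Rightarrow> real) \<Rightarrow> ('u \<Rightarrow> 'a) \<Rightarrow> ('a \<Rightarrow> nat \<Rightarrow> real) \<Rightarrow> 'u \<times> nat \<Rightarrow> real" where
  "extend_pmf R \<alpha> c = (\<lambda>w. R (fst w) * c (\<alpha> (fst w)) (snd w))"

text \<open>Mass of the g-class of u when the weights are rescaled by the column \<open>col \<circ> \<alpha>\<close>; for the
  column \<open>col = (\<lambda>x. c x b)\<close> this is the probability of \<open>{g = g u, output = b}\<close>.\<close>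
definition column_mass :: "'u set \<Rightarrow> ('u \<Rightarrow> real) \<Rightarrow> ('u \<Rightarrow> 'a) \<Rightarrow> ('u \<Rightarrow> 'g) \<Rightarrow> ('a \<Rightarrow> real) \<Rightarrow> 'u \<Rightarrow> real"
  where "column_mass Om R \<alpha> g col u = (\<Sum>u'\<in>{u'\<in>Om. g u' = g u}. R u' * col (\<alpha> u'))"

lemma sum_product_split: "(\<Sum>w\<in>A \<times> B. h w) = (\<Sum>u\<in>A. \<Sum>b\<in>B. h (u, b))"
  by (simp add: sum.cartesian_product)

text \<open>The zero-mass convention in the definition is immaterial: zero terms vanish anyway.\<close>
lemma cond_mutual_info_eq_sum:
  "cond_mutual_info Om P A B C =
     (\<Sum>w\<in>Om. P w * log 2 ((marg Om P (\<lambda>u. (A u, B u, C u)) (A w, B w, C w) * marg Om P C (C w)) /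
                     (marg Om P (\<lambda>u. (A u, C u)) (A w, C w) * marg Om P (\<lambda>u. (B u, C u)) (B w, C w))))"
  unfolding cond_mutual_info_def by (intro sum.cong) auto

lemma marg_reindex:
  assumes "bij_betw \<Phi> Om0 Om"
  shows "marg Om P f y = marg Om0 (\<lambda>w. P (\<Phi> w)) (\<lambda>w. f (\<Phi> w)) y"
proof -
  have "bij_betw \<Phi> {w\<in>Om0. f (\<Phi> w) = y} {w\<in>Om. f w = y}"
    using assms by (auto simp: bij_betw_def inj_on_def image_iff)
  then show ?thesis unfolding marg_def by (simp add: sum.reindex_bij_betw)
qed

lemma cond_mutual_info_reindex:
  assumes "bij_betw \<Phi> Om0 Om"
  shows "cond_mutual_info Om P A B C =
    cond_mutual_info Om0 (\<lambda>w. P (\<Phi> w)) (\<lambda>w. A (\<Phi> w)) (\<lambda>w. B (\<Phi> w)) (\<lambda>w. C (\<Phi> w))"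
  unfolding cond_mutual_info_def marg_reindex[OF assms]
  by (rule sum.reindex_bij_betw[OF assms, symmetric])

lemma marg_extend_fst:
  assumes "\<forall>u\<in>Om. (\<Sum>b<N. c (\<alpha> u) b) = 1"
  shows "marg (Om \<times> {..<N}) (extend_pmf R \<alpha> c) (\<lambda>w. g (fst w)) y = marg Om R g y"
proof -
  have "{w \<in> Om \<times> {..<N}. g (fst w) = y} = {u\<in>Om. g u = y} \<times> {..<N}" by auto
  then have "marg (Om \<times> {..<N}) (extend_pmf R \<alpha> c) (\<lambda>w. g (fst w)) y
     = (\<Sum>u\<in>{u\<in>Om. g u = y}. \<Sum>b<N. R u * c (\<alpha> u) b)"
    unfolding marg_def extend_pmf_def by (simp only: sum_product_split fst_conv snd_conv)
  also have "\<dots> = (\<Sum>u\<in>{u\<in>Om. g u = y}. R u)"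
    using assms by (intro sum.cong) (auto simp: sum_distrib_left[symmetric])
  finally show ?thesis by (simp add: marg_def)
qed

lemma marg_extend_column:
  assumes "u \<in> Om" "b < N"
    and "\<And>u' b'. u' \<in> Om \<Longrightarrow> b' < N \<Longrightarrow> f (u', b') = f (u, b) \<longleftrightarrow> g u' = g u \<and> b' = b"
  shows "marg (Om \<times> {..<N}) (extend_pmf R \<alpha> c) f (f (u, b)) = column_mass Om R \<alpha> g (\<lambda>x. c x b) u"
proof -
  have "{w \<in> Om \<times> {..<N}. f w = f (u, b)} = {u'\<in>Om. g u' = g u} \<times> {b}"
    using assms by auto
  then show ?thesis unfolding marg_def column_mass_def extend_pmf_def
    by (simp only: sum_product_split fst_conv snd_conv) simp
qed

lemma cond_mutual_info_extend_fst:
  assumes s1: "\<forall>u\<in>Om. (\<Sum>b<N. c (\<alpha> u) b) = 1"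
  shows "cond_mutual_info (Om \<times> {..<N}) (extend_pmf R \<alpha> c)
           (\<lambda>w. A (fst w)) (\<lambda>w. B (fst w)) (\<lambda>w. C (fst w))
     = cond_mutual_info Om R A B C"
proof -
  have mf: "\<And>g y. marg (Om \<times> {..<N}) (extend_pmf R \<alpha> c) (\<lambda>w. g (fst w)) y = marg Om R g y"
    by (rule marg_extend_fst[where c=c and \<alpha>=\<alpha> and N=N, OF s1])
  let ?L = "\<lambda>u. log 2 ((marg Om R (\<lambda>u. (A u, B u, C u)) (A u, B u, C u) * marg Om R C (C u)) /
                     (marg Om R (\<lambda>u. (A u, C u)) (A u, C u) * marg Om R (\<lambda>u. (B u, C u)) (B u, C u)))"
  have "cond_mutual_info (Om \<times> {..<N}) (extend_pmf R \<alpha> c) (\<lambda>w. A (fst w)) (\<lambda>w. B (fst w)) (\<lambda>w. C (fst w))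
      = (\<Sum>u\<in>Om. \<Sum>b<N. R u * c (\<alpha> u) b * ?L u)"
    unfolding cond_mutual_info_eq_sum
    using mf[of "\<lambda>u. (A u, B u, C u)"] mf[of C] mf[of "\<lambda>u. (A u, C u)"] mf[of "\<lambda>u. (B u, C u)"]
    by (simp only: sum_product_split fst_conv snd_conv extend_pmf_def)
  also have "\<dots> = (\<Sum>u\<in>Om. R u * ?L u)"
    using s1 by (intro sum.cong refl) (simp add: sum_distrib_left[symmetric] sum_distrib_right[symmetric])
  finally show ?thesis unfolding cond_mutual_info_eq_sum .
qed

text \<open>The contribution of one output symbol to \<open>I(A; B | C, output)\<close>, as a functional of the
  corresponding channel column.\<close>
definition cmi_column :: "'u set \<Rightarrow> ('u \<Rightarrow> real) \<Rightarrow> ('u \<Rightarrow> 'a) \<Rightarrow> ('u \<Rightarrow> 'b1) \<Rightarrow> ('u \<Rightarrow> 'b2)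
    \<Rightarrow> ('u \<Rightarrow> 'b3) \<Rightarrow> ('a \<Rightarrow> real) \<Rightarrow> real" where
  "cmi_column Om R \<alpha> A B C col = (\<Sum>u\<in>Om. R u * col (\<alpha> u) *
     log 2 (column_mass Om R \<alpha> (\<lambda>u. (A u, B u, C u)) col u * column_mass Om R \<alpha> C col u /
            (column_mass Om R \<alpha> (\<lambda>u. (A u, C u)) col u * column_mass Om R \<alpha> (\<lambda>u. (B u, C u)) col u)))"

lemma cond_mutual_info_extend_split:
  assumes hA: "\<And>u b. A' (u, b) = A u" and hB: "\<And>u b. B' (u, b) = B u"
    and hC: "\<And>u u' b b'. u \<in> Om \<Longrightarrow> u' \<in> Om \<Longrightarrow> b < N \<Longrightarrow> b' < N \<Longrightarrow>
               C' (u', b') = C' (u, b) \<longleftrightarrow> C u' = C u \<and> b' = b"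
  shows "cond_mutual_info (Om \<times> {..<N}) (extend_pmf R \<alpha> c) A' B' C'
     = (\<Sum>b<N. cmi_column Om R \<alpha> A B C (\<lambda>x. c x b))"
proof -
  let ?P = "extend_pmf R \<alpha> c"
  let ?\<Omega> = "Om \<times> {..<N}"
  let ?cm = "\<lambda>g b u. column_mass Om R \<alpha> g (\<lambda>x. c x b) u"
  have "cond_mutual_info ?\<Omega> ?P A' B' C' = (\<Sum>u\<in>Om. \<Sum>b<N. R u * c (\<alpha> u) b *
     log 2 (?cm (\<lambda>u. (A u, B u, C u)) b u * ?cm C b u / (?cm (\<lambda>u. (A u, C u)) b u * ?cm (\<lambda>u. (B u, C u)) b u)))"
    unfolding cond_mutual_info_eq_sum sum_product_split
  proof (intro sum.cong refl)
    fix u b assume u: "u \<in> Om" and b: "b \<in> {..<N}"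
    note col = marg_extend_column[of u Om b N _ _ R \<alpha> c]
    have "marg ?\<Omega> ?P (\<lambda>u. (A' u, B' u, C' u)) (A' (u,b), B' (u,b), C' (u,b)) = ?cm (\<lambda>u. (A u, B u, C u)) b u"
      using col[of "\<lambda>u. (A' u, B' u, C' u)" "\<lambda>u. (A u, B u, C u)"] u b hA hB hC by auto
    moreover have "marg ?\<Omega> ?P C' (C' (u,b)) = ?cm C b u"
      using col[of C' C] u b hC by auto
    moreover have "marg ?\<Omega> ?P (\<lambda>u. (A' u, C' u)) (A' (u,b), C' (u,b)) = ?cm (\<lambda>u. (A u, C u)) b u"
      using col[of "\<lambda>u. (A' u, C' u)" "\<lambda>u. (A u, C u)"] u b hA hC by auto
    moreover have "marg ?\<Omega> ?P (\<lambda>u. (B' u, C' u)) (B' (u,b), C' (u,b)) = ?cm (\<lambda>u. (B u, C u)) b u"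
      using col[of "\<lambda>u. (B' u, C' u)" "\<lambda>u. (B u, C u)"] u b hB hC by auto
    ultimately show "?P (u,b) *
       log 2 ((marg ?\<Omega> ?P (\<lambda>u. (A' u, B' u, C' u)) (A' (u,b), B' (u,b), C' (u,b)) * marg ?\<Omega> ?P C' (C' (u,b))) /
       (marg ?\<Omega> ?P (\<lambda>u. (A' u, C' u)) (A' (u,b), C' (u,b)) * marg ?\<Omega> ?P (\<lambda>u. (B' u, C' u)) (B' (u,b), C' (u,b))))
      = R u * c (\<alpha> u) b *
       log 2 (?cm (\<lambda>u. (A u, B u, C u)) b u * ?cm C b u / (?cm (\<lambda>u. (A u, C u)) b u * ?cm (\<lambda>u. (B u, C u)) b u))"
      by (simp only: extend_pmf_def fst_conv snd_conv)
  qed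
  also have "\<dots> = (\<Sum>b<N. cmi_column Om R \<alpha> A B C (\<lambda>x. c x b))"
    unfolding cmi_column_def by (rule sum.swap)
  finally show ?thesis .
qed

text \<open>The contribution of one output symbol to \<open>I(\<alpha>; output | C)\<close>.\<close>
definition cmi_output_column :: "'u set \<Rightarrow> ('u \<Rightarrow> real) \<Rightarrow> ('u \<Rightarrow> 'a) \<Rightarrow> ('u \<Rightarrow> 'b) \<Rightarrow> ('a \<Rightarrow> real) \<Rightarrow> real"
  where "cmi_output_column Om R \<alpha> C col = (\<Sum>u\<in>Om. R u * col (\<alpha> u) *
     log 2 (col (\<alpha> u) * marg Om R (\<lambda>u. (\<alpha> u, C u)) (\<alpha> u, C u) * marg Om R C (C u) /
            (marg Om R (\<lambda>u. (\<alpha> u, C u)) (\<alpha> u, C u) * column_mass Om R \<alpha> C col u)))"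

lemma cond_mutual_info_extend_output:
  assumes s1: "\<forall>u\<in>Om. (\<Sum>b<N. c (\<alpha> u) b) = 1"
  shows "cond_mutual_info (Om \<times> {..<N}) (extend_pmf R \<alpha> c) (\<lambda>w. \<alpha> (fst w)) snd (\<lambda>w. C (fst w))
     = (\<Sum>b<N. cmi_output_column Om R \<alpha> C (\<lambda>x. c x b))"
proof -
  let ?P = "extend_pmf R \<alpha> c"
  let ?\<Omega> = "Om \<times> {..<N}"
  have mf: "\<And>g y. marg ?\<Omega> ?P (\<lambda>w. g (fst w)) y = marg Om R g y"
    by (rule marg_extend_fst[where c=c and \<alpha>=\<alpha> and N=N, OF s1])
  have "cond_mutual_info ?\<Omega> ?P (\<lambda>w. \<alpha> (fst w)) snd (\<lambda>w. C (fst w)) = (\<Sum>u\<in>Om. \<Sum>b<N. R u * c (\<alpha> u) b *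
     log 2 (c (\<alpha> u) b * marg Om R (\<lambda>u. (\<alpha> u, C u)) (\<alpha> u, C u) * marg Om R C (C u) /
            (marg Om R (\<lambda>u. (\<alpha> u, C u)) (\<alpha> u, C u) * column_mass Om R \<alpha> C (\<lambda>x. c x b) u)))"
    unfolding cond_mutual_info_eq_sum sum_product_split
  proof (intro sum.cong refl)
    fix u b assume u: "u \<in> Om" and b: "b \<in> {..<N}"
    have "{w \<in> ?\<Omega>. (\<alpha> (fst w), snd w, C (fst w)) = (\<alpha> u, b, C u)}
        = {u'\<in>Om. (\<alpha> u', C u') = (\<alpha> u, C u)} \<times> {b}"
      using b by auto
    then have "marg ?\<Omega> ?P (\<lambda>w. (\<alpha> (fst w), snd w, C (fst w))) (\<alpha> u, b, C u)
        = (\<Sum>u'\<in>{u'\<in>Om. (\<alpha> u', C u') = (\<alpha> u, C u)}. c (\<alpha> u) b * R u')"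
      unfolding marg_def extend_pmf_def by (simp only: sum_product_split fst_conv snd_conv) (simp add: mult.commute)
    then have e1: "marg ?\<Omega> ?P (\<lambda>w. (\<alpha> (fst w), snd w, C (fst w))) (\<alpha> u, b, C u)
        = c (\<alpha> u) b * marg Om R (\<lambda>u. (\<alpha> u, C u)) (\<alpha> u, C u)"
      by (simp add: marg_def sum_distrib_left)
    have e2: "marg ?\<Omega> ?P (\<lambda>w. (snd w, C (fst w))) (b, C u) = column_mass Om R \<alpha> C (\<lambda>x. c x b) u"
      using marg_extend_column[of u Om b N "\<lambda>w. (snd w, C (fst w))" C R \<alpha> c] u b by auto
    show "?P (u, b) *
       log 2 (marg ?\<Omega> ?P (\<lambda>w. (\<alpha> (fst w), snd w, C (fst w))) (\<alpha> (fst (u, b)), snd (u, b), C (fst (u, b))) *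
              marg ?\<Omega> ?P (\<lambda>w. C (fst w)) (C (fst (u, b))) /
             (marg ?\<Omega> ?P (\<lambda>w. (\<alpha> (fst w), C (fst w))) (\<alpha> (fst (u, b)), C (fst (u, b))) *
              marg ?\<Omega> ?P (\<lambda>w. (snd w, C (fst w))) (snd (u, b), C (fst (u, b)))))
      = R u * c (\<alpha> u) b *
       log 2 (c (\<alpha> u) b * marg Om R (\<lambda>u. (\<alpha> u, C u)) (\<alpha> u, C u) * marg Om R C (C u) /
            (marg Om R (\<lambda>u. (\<alpha> u, C u)) (\<alpha> u, C u) * column_mass Om R \<alpha> C (\<lambda>x. c x b) u))"
      using e1 e2 mf[of C] mf[of "\<lambda>u. (\<alpha> u, C u)"] by (simp add: extend_pmf_def)
  qed
  also have "\<dots> = (\<Sum>b<N. cmi_output_column Om R \<alpha> C (\<lambda>x. c x b))"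
    unfolding cmi_output_column_def by (rule sum.swap)
  finally show ?thesis .
qed

section \<open>The rate contributions are continuous column functionals\<close>

lemma column_mass_scale: "column_mass Om R \<alpha> g (\<lambda>x. t * col x) u = t * column_mass Om R \<alpha> g col u"
  unfolding column_mass_def by (simp add: sum_distrib_left algebra_simps)

lemma column_mass_local:
  "\<forall>x\<in>\<alpha> ` Om. col x = col' x \<Longrightarrow> column_mass Om R \<alpha> g col u = column_mass Om R \<alpha> g col' u"
  unfolding column_mass_def by (intro sum.cong) auto

lemma column_mass_ge:
  assumes "finite Om" "u \<in> Om" "\<And>u'. u' \<in> Om \<Longrightarrow> 0 \<le> R u' * col (\<alpha> u')"
  shows "R u * col (\<alpha> u) \<le> column_mass Om R \<alpha> g col u"
  unfolding column_mass_def using assms by (intro member_le_sum) auto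

lemma marg_ge:
  assumes "finite Om" "u \<in> Om" "\<And>u'. u' \<in> Om \<Longrightarrow> 0 \<le> R u'"
  shows "R u \<le> marg Om R g (g u)"
  unfolding marg_def using assms by (intro member_le_sum) auto

lemma continuous_on_column_mass: "continuous_on S (\<lambda>col. column_mass Om R \<alpha> g col u)"
  unfolding column_mass_def by (intro continuous_intros)

lemma ratio_scale_cancel:
  fixes t a b c d e :: real
  assumes "t \<noteq> 0"
  shows "(t * a) * (t * b) / ((t * c) * (t * d)) = a * b / (c * d)"
    and "(t * a) * b * c / (d * (t * e)) = a * b * c / (d * e)"
proof -
  have "(t * a) * (t * b) / ((t * c) * (t * d)) = ((t * t) * (a * b)) / ((t * t) * (c * d))"
    by (simp add: algebra_simps)
  then show "(t * a) * (t * b) / ((t * c) * (t * d)) = a * b / (c * d)"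
    using assms by simp
  have "(t * a) * b * c / (d * (t * e)) = t * (a * b * c) / (t * (d * e))"
    by (simp add: algebra_simps)
  then show "(t * a) * b * c / (d * (t * e)) = a * b * c / (d * e)"
    using assms by simp
qed

lemma column_functional_cmi_column:
  assumes "\<alpha> ` Om \<subseteq> X"
  shows "column_functional X (cmi_column Om R \<alpha> A B C)"
proof (rule column_functionalI)
  fix col col' :: "'a \<Rightarrow> real" assume "\<forall>x\<in>X. col x = col' x"
  then have "\<forall>x\<in>\<alpha> ` Om. col x = col' x" using assms by blast
  then show "cmi_column Om R \<alpha> A B C col = cmi_column Om R \<alpha> A B C col'"
    unfolding cmi_column_def by (intro sum.cong refl) (simp add: column_mass_local[of \<alpha> Om col col'])
next
  fix col :: "'a \<Rightarrow> real" and t :: real assume "0 \<le> t"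
  show "cmi_column Om R \<alpha> A B C (\<lambda>x. t * col x) = t * cmi_column Om R \<alpha> A B C col"
  proof (cases "t = 0")
    case False
    then show ?thesis unfolding cmi_column_def column_mass_scale
      by (simp add: ratio_scale_cancel sum_distrib_left algebra_simps)
  qed (simp add: cmi_column_def)
qed

lemma column_functional_cmi_output_column:
  assumes "\<alpha> ` Om \<subseteq> X"
  shows "column_functional X (cmi_output_column Om R \<alpha> C)"
proof (rule column_functionalI)
  fix col col' :: "'a \<Rightarrow> real" assume "\<forall>x\<in>X. col x = col' x"
  then have "\<forall>x\<in>\<alpha> ` Om. col x = col' x" using assms by blast
  then show "cmi_output_column Om R \<alpha> C col = cmi_output_column Om R \<alpha> C col'"
    unfolding cmi_output_column_def by (intro sum.cong refl) (simp add: column_mass_local[of \<alpha> Om col col'])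
next
  fix col :: "'a \<Rightarrow> real" and t :: real assume "0 \<le> t"
  show "cmi_output_column Om R \<alpha> C (\<lambda>x. t * col x) = t * cmi_output_column Om R \<alpha> C col"
  proof (cases "t = 0")
    case False
    then show ?thesis unfolding cmi_output_column_def column_mass_scale
      by (simp add: ratio_scale_cancel sum_distrib_left algebra_simps)
  qed (simp add: cmi_output_column_def)
qed

text \<open>Continuity on \<open>[0,1]\<^sup>X\<close>: every summand is of the form \<open>P log (Q\<^sub>1 Q\<^sub>2 / (Q\<^sub>3 Q\<^sub>4))\<close> with masses
  \<open>Q\<^sub>i \<ge> P\<close>.\<close>
lemma continuous_on_cmi_column:
  fixes \<alpha> :: "'u \<Rightarrow> 'a"
  assumes fin: "finite Om" and R: "\<And>u. u \<in> Om \<Longrightarrow> 0 \<le> R u" and \<alpha>: "\<alpha> ` Om \<subseteq> X"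
  shows "continuous_on {c. \<forall>x\<in>X. 0 \<le> c x \<and> c x \<le> 1} (cmi_column Om R \<alpha> A B C)"
  unfolding cmi_column_def
proof (intro continuous_on_sum continuous_on_mult_log_ratio continuous_intros continuous_on_column_mass)
  fix u and col :: "'a \<Rightarrow> real" assume u: "u \<in> Om" and col: "col \<in> {c. \<forall>x\<in>X. 0 \<le> c x \<and> c x \<le> 1}"
  have "0 \<le> R u' * col (\<alpha> u')" if "u' \<in> Om" for u'
    using R[OF that] col \<alpha> that by auto
  then show "0 \<le> R u * col (\<alpha> u) \<and> R u * col (\<alpha> u) \<le> column_mass Om R \<alpha> (\<lambda>u. (A u, B u, C u)) col u \<and>
      R u * col (\<alpha> u) \<le> column_mass Om R \<alpha> C col u \<and>
      R u * col (\<alpha> u) \<le> column_mass Om R \<alpha> (\<lambda>u. (A u, C u)) col u \<and>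
      R u * col (\<alpha> u) \<le> column_mass Om R \<alpha> (\<lambda>u. (B u, C u)) col u"
    using u by (auto intro: column_mass_ge[OF fin])
qed

lemma continuous_on_cmi_output_column:
  fixes \<alpha> :: "'u \<Rightarrow> 'a"
  assumes fin: "finite Om" and R: "\<And>u. u \<in> Om \<Longrightarrow> 0 \<le> R u" and \<alpha>: "\<alpha> ` Om \<subseteq> X"
  shows "continuous_on {c. \<forall>x\<in>X. 0 \<le> c x \<and> c x \<le> 1} (cmi_output_column Om R \<alpha> C)"
  unfolding cmi_output_column_def
proof (intro continuous_on_sum continuous_on_mult_log_ratio continuous_intros continuous_on_column_mass)
  fix u and col :: "'a \<Rightarrow> real" assume u: "u \<in> Om" and col: "col \<in> {c. \<forall>x\<in>X. 0 \<le> c x \<and> c x \<le> 1}"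
  have nonneg: "0 \<le> R u' * col (\<alpha> u')" if "u' \<in> Om" for u'
    using R[OF that] col \<alpha> that by auto
  have c01: "0 \<le> col (\<alpha> u)" "col (\<alpha> u) \<le> 1" and Ru: "0 \<le> R u" using col \<alpha> u R by auto
  have m1: "R u \<le> marg Om R (\<lambda>u. (\<alpha> u, C u)) (\<alpha> u, C u)"
    using marg_ge[OF fin u, of R "\<lambda>u. (\<alpha> u, C u)"] R by auto
  have m2: "R u \<le> marg Om R C (C u)"
    using marg_ge[OF fin u, of R C] R by auto
  have "R u * col (\<alpha> u) \<le> R u" using Ru c01 by (simp add: mult_left_le)
  moreover have "R u * col (\<alpha> u) \<le> col (\<alpha> u) * marg Om R (\<lambda>u. (\<alpha> u, C u)) (\<alpha> u, C u)"
    using mult_right_mono[OF m1 c01(1)] by (simp add: mult.commute)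
  ultimately show "0 \<le> R u * col (\<alpha> u) \<and>
       R u * col (\<alpha> u) \<le> col (\<alpha> u) * marg Om R (\<lambda>u. (\<alpha> u, C u)) (\<alpha> u, C u) \<and>
       R u * col (\<alpha> u) \<le> marg Om R C (C u) \<and>
       R u * col (\<alpha> u) \<le> marg Om R (\<lambda>u. (\<alpha> u, C u)) (\<alpha> u, C u) \<and>
       R u * col (\<alpha> u) \<le> column_mass Om R \<alpha> C col u"
    using nonneg u m1 m2 Ru c01 by (auto intro: column_mass_ge[OF fin])
qed

section \<open>The distortion contributions\<close>

definition decoder_cost :: "'u set \<Rightarrow> ('u \<Rightarrow> real) \<Rightarrow> ('u \<Rightarrow> 'a) \<Rightarrow> ('u \<Rightarrow> 'v) \<Rightarrow> ('v \<Rightarrow> 'r \<Rightarrow> real)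
    \<Rightarrow> ('a \<Rightarrow> real) \<Rightarrow> ('u \<Rightarrow> 'r) \<Rightarrow> real" where
  "decoder_cost Om R \<alpha> vv dl col r = (\<Sum>u\<in>Om. R u * col (\<alpha> u) * dl (vv u) (r u))"

definition min_decoder_cost :: "'u set \<Rightarrow> ('u \<Rightarrow> real) \<Rightarrow> ('u \<Rightarrow> 'a) \<Rightarrow> ('u \<Rightarrow> 'v) \<Rightarrow> ('u \<Rightarrow> 'y)
    \<Rightarrow> 'r set \<Rightarrow> ('v \<Rightarrow> 'r \<Rightarrow> real) \<Rightarrow> ('a \<Rightarrow> real) \<Rightarrow> real" where
  "min_decoder_cost Om R \<alpha> vv io Rg dl col =
     Inf ((\<lambda>\<phi>. decoder_cost Om R \<alpha> vv dl col (\<lambda>u. \<phi> (io u))) ` {\<phi>. \<forall>y. \<phi> y \<in> Rg})"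

lemma decoder_cost_restrict:
  "decoder_cost Om R \<alpha> vv dl col r = decoder_cost Om R \<alpha> vv dl col (restrict r Om)"
  unfolding decoder_cost_def by (intro sum.cong) auto

text \<open>Only finitely many decoder behaviours on the finite space matter, so the infimum is a
  minimum over a fixed finite set of decoder outputs.\<close>
lemma min_decoder_cost_eq_Min:
  fixes io :: "'u \<Rightarrow> 'y" and Om :: "'u set"
  assumes fin: "finite Om" "finite Rg" and ne: "Rg \<noteq> {}"
  defines "Rs \<equiv> (\<lambda>\<phi>. restrict (\<lambda>u. \<phi> (io u)) Om) ` {\<phi>. \<forall>y. \<phi> y \<in> Rg}"
  shows "finite Rs" "Rs \<noteq> {}"
    "min_decoder_cost Om R \<alpha> vv io Rg dl col = Min ((\<lambda>r. decoder_cost Om R \<alpha> vv dl col r) ` Rs)"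
proof -
  have "Rs \<subseteq> PiE Om (\<lambda>_. Rg)" unfolding Rs_def by auto
  then show fR: "finite Rs" using finite_subset fin by (metis finite_PiE)
  obtain r0 where "r0 \<in> Rg" using ne by auto
  then show neR: "Rs \<noteq> {}" unfolding Rs_def by (auto intro!: exI[of _ "\<lambda>_. r0"])
  have "(\<lambda>\<phi>. decoder_cost Om R \<alpha> vv dl col (\<lambda>u. \<phi> (io u))) ` {\<phi>. \<forall>y. \<phi> y \<in> Rg}
      = (\<lambda>r. decoder_cost Om R \<alpha> vv dl col r) ` Rs"
    unfolding Rs_def image_image decoder_cost_def by (intro image_cong refl sum.cong) auto
  then show "min_decoder_cost Om R \<alpha> vv io Rg dl col = Min ((\<lambda>r. decoder_cost Om R \<alpha> vv dl col r) ` Rs)"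
    unfolding min_decoder_cost_def using fR neR by (simp add: cInf_eq_Min)
qed

lemma continuous_on_Min:
  fixes f :: "'i \<Rightarrow> 'x::topological_space \<Rightarrow> real"
  assumes "finite I" "I \<noteq> {}" "\<And>i. i \<in> I \<Longrightarrow> continuous_on S (f i)"
  shows "continuous_on S (\<lambda>x. Min ((\<lambda>i. f i x) ` I))"
  using assms
proof (induction I rule: finite_ne_induct)
  case (insert i I)
  have "continuous_on S (\<lambda>x. min (f i x) (Min ((\<lambda>i. f i x) ` I)))"
    using insert by (intro continuous_on_min) auto
  then show ?case using insert by (simp add: Min_insert)
qed simp

lemma column_functional_min_decoder_cost:
  assumes fin: "finite Om" "finite Rg" and ne: "Rg \<noteq> {}" and \<alpha>: "\<alpha> ` Om \<subseteq> X"
  shows "column_functional X (min_decoder_cost Om R \<alpha> vv io Rg dl)"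
proof (rule column_functionalI)
  define Rs where "Rs = (\<lambda>\<phi>. restrict (\<lambda>u. \<phi> (io u)) Om) ` {\<phi>. \<forall>y. \<phi> y \<in> Rg}"
  note M = min_decoder_cost_eq_Min[where io=io, OF fin ne, folded Rs_def]
  let ?H = "\<lambda>col r. decoder_cost Om R \<alpha> vv dl col r"
  show "min_decoder_cost Om R \<alpha> vv io Rg dl col = min_decoder_cost Om R \<alpha> vv io Rg dl col'"
    if "\<forall>x\<in>X. col x = col' x" for col col'
    unfolding M(3) decoder_cost_def using that \<alpha> by (intro arg_cong[where f=Min] image_cong refl sum.cong) auto
  show "min_decoder_cost Om R \<alpha> vv io Rg dl (\<lambda>x. t * col x) = t * min_decoder_cost Om R \<alpha> vv io Rg dl col"
    if t: "0 \<le> t" for t col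
  proof -
    have "(\<lambda>r. ?H (\<lambda>x. t * col x) r) ` Rs = (\<lambda>y. t * y) ` ((\<lambda>r. ?H col r) ` Rs)"
      unfolding image_image decoder_cost_def
      by (intro image_cong refl) (simp add: sum_distrib_left algebra_simps)
    moreover have "mono (\<lambda>y::real. t * y)" using t by (auto intro: monoI mult_left_mono)
    ultimately show ?thesis
      unfolding M(3) using mono_Min_commute[of "\<lambda>y. t * y" "(\<lambda>r. ?H col r) ` Rs"] M(1,2) by simp
  qed
qed

lemma continuous_on_min_decoder_cost:
  assumes fin: "finite Om" "finite Rg" and ne: "Rg \<noteq> {}"
  shows "continuous_on S (min_decoder_cost Om R \<alpha> vv io Rg dl)"
proof -
  define Rs where "Rs = (\<lambda>\<phi>. restrict (\<lambda>u. \<phi> (io u)) Om) ` {\<phi>. \<forall>y. \<phi> y \<in> Rg}"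
  note M = min_decoder_cost_eq_Min[where io=io, OF fin ne, folded Rs_def]
  have "continuous_on S (\<lambda>col. Min ((\<lambda>r. decoder_cost Om R \<alpha> vv dl col r) ` Rs))"
    using M(1,2) by (intro continuous_on_Min) (auto simp: decoder_cost_def intro!: continuous_intros)
  moreover have "min_decoder_cost Om R \<alpha> vv io Rg dl = (\<lambda>col. Min ((\<lambda>r. decoder_cost Om R \<alpha> vv dl col r) ` Rs))"
    using M(3) by (rule ext)
  ultimately show ?thesis by simp
qed

lemma Inf_sum_separable:
  fixes H :: "nat \<Rightarrow> ('y \<Rightarrow> 'r) \<Rightarrow> real" and ins :: "'y \<Rightarrow> nat \<Rightarrow> 'y"
  assumes fin: "\<And>b. b < N \<Longrightarrow> finite (H b ` \<Psi>)" and ne: "\<Psi> \<noteq> {}"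
    and slice: "\<And>\<psi> b. \<psi> \<in> \<Psi> \<Longrightarrow> b < N \<Longrightarrow> (\<lambda>y. \<psi> (ins y b)) \<in> \<Psi>"
    and glue: "\<And>\<phi>s. (\<forall>b<N. \<phi>s b \<in> \<Psi>) \<Longrightarrow> \<exists>\<psi>\<in>\<Psi>. \<forall>b<N. H b (\<lambda>y. \<psi> (ins y b)) = H b (\<phi>s b)"
  shows "Inf ((\<lambda>\<psi>. \<Sum>b<N. H b (\<lambda>y. \<psi> (ins y b))) ` \<Psi>) = (\<Sum>b<N. Inf (H b ` \<Psi>))"
proof -
  let ?S = "(\<lambda>\<psi>. \<Sum>b<N. H b (\<lambda>y. \<psi> (ins y b))) ` \<Psi>"
  have lower: "(\<Sum>b<N. Inf (H b ` \<Psi>)) \<le> s" if "s \<in> ?S" for s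
  proof -
    obtain \<psi> where \<psi>: "\<psi> \<in> \<Psi>" "s = (\<Sum>b<N. H b (\<lambda>y. \<psi> (ins y b)))" using \<open>s \<in> ?S\<close> by auto
    have "Inf (H b ` \<Psi>) \<le> H b (\<lambda>y. \<psi> (ins y b))" if "b < N" for b
      using fin[OF that] slice[OF \<psi>(1) that] by (intro cInf_lower) auto
    then show ?thesis using \<psi>(2) by (auto intro: sum_mono)
  qed
  have "\<forall>b<N. \<exists>\<phi>\<in>\<Psi>. H b \<phi> = Inf (H b ` \<Psi>)"
  proof (intro allI impI)
    fix b assume "b < N"
    then have "Inf (H b ` \<Psi>) \<in> H b ` \<Psi>" using fin ne by (simp add: cInf_eq_Min)
    then show "\<exists>\<phi>\<in>\<Psi>. H b \<phi> = Inf (H b ` \<Psi>)" by auto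
  qed
  then obtain \<phi>s where \<phi>s: "\<forall>b<N. \<phi>s b \<in> \<Psi> \<and> H b (\<phi>s b) = Inf (H b ` \<Psi>)" by metis
  then obtain \<psi> where \<psi>: "\<psi> \<in> \<Psi>" "\<forall>b<N. H b (\<lambda>y. \<psi> (ins y b)) = H b (\<phi>s b)"
    using glue[of \<phi>s] by auto
  have "(\<Sum>b<N. Inf (H b ` \<Psi>)) = (\<Sum>b<N. H b (\<lambda>y. \<psi> (ins y b)))"
    using \<psi>(2) \<phi>s by (intro sum.cong) auto
  then have attained: "(\<Sum>b<N. Inf (H b ` \<Psi>)) \<in> ?S" using \<psi>(1) by blast
  show ?thesis
  proof (rule antisym)
    show "Inf ?S \<le> (\<Sum>b<N. Inf (H b ` \<Psi>))"
      using attained lower by (intro cInf_lower) (auto simp: bdd_below_def)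
    show "(\<Sum>b<N. Inf (H b ` \<Psi>)) \<le> Inf ?S" using attained lower by (intro cInf_greatest) auto
  qed
qed

definition insert_obs :: "nat \<Rightarrow> (nat \<Rightarrow> 'a) \<times> (nat \<Rightarrow> nat) \<times> 's \<Rightarrow> nat \<Rightarrow> (nat \<Rightarrow> 'a) \<times> (nat \<Rightarrow> nat) \<times> 's"
  where "insert_obs k = (\<lambda>(y1, y2, y3) b. (y1, y2(k := b), y3))"

lemma expected_distortion_split:
  fixes p :: "(nat \<Rightarrow> 'a) \<times> 's \<times> 'v \<Rightarrow> real" and dl :: "'v \<Rightarrow> 'r \<Rightarrow> real"
    and \<psi> :: "(nat \<Rightarrow> 'a) \<times> (nat \<Rightarrow> nat) \<times> 's \<Rightarrow> 'r"
  assumes k: "k \<in> {J+1..M}"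
  shows "(\<Sum>w\<in>joint_space M J AX AS AV (n(k := N)).
            joint_pmf M J p (q(k := qk)) w *
            (case w of ((x, s, v), z) \<Rightarrow> dl v (\<psi> (restrict x {1..J}, restrict z {J+1..M}, s))))
     = (\<Sum>b<N. decoder_cost (reduced_space M J k AX AS AV n) (reduced_pmf M J k p q) (var_x k) var_v dl
                (\<lambda>x. qk x b) (\<lambda>u. \<psi> (insert_obs k (var_obs M J u) b)))"
    (is "(\<Sum>w\<in>_. ?g w) = _")
proof -
  let ?\<Omega> = "reduced_space M J k AX AS AV n"
  let ?R = "reduced_pmf M J k p q"
  have "(\<Sum>w\<in>joint_space M J AX AS AV (n(k := N)). ?g w) = (\<Sum>w\<in>?\<Omega> \<times> {..<N}. ?g (insert_z k w))"
    by (rule sum.reindex_bij_betw[OF bij_insert_z[OF k], symmetric])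
  also have "\<dots> = (\<Sum>u\<in>?\<Omega>. \<Sum>b<N. ?R u * qk (var_x k u) b * dl (var_v u) (\<psi> (insert_obs k (var_obs M J u) b)))"
    unfolding sum_product_split
  proof (intro sum.cong refl)
    fix u :: "((nat \<Rightarrow> 'a) \<times> 's \<times> 'v) \<times> (nat \<Rightarrow> nat)" and b :: nat
    obtain x s v z where u: "u = ((x, s, v), z)" by (metis prod.collapse)
    have "restrict (z(k := b)) {J+1..M} = (restrict z {J+1..M})(k := b)"
      using k by (auto simp: restrict_def fun_eq_iff)
    then show "?g (insert_z k (u, b)) = ?R u * qk (var_x k u) b * dl (var_v u) (\<psi> (insert_obs k (var_obs M J u) b))"
      using joint_pmf_insert_z[OF k, of p q qk "(u, b)"] u
      by (simp add: insert_z_def var_v_def var_obs_def insert_obs_def)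
  qed
  also have "\<dots> = (\<Sum>b<N. decoder_cost ?\<Omega> ?R (var_x k) var_v dl (\<lambda>x. qk x b) (\<lambda>u. \<psi> (insert_obs k (var_obs M J u) b)))"
    unfolding decoder_cost_def by (rule sum.swap)
  finally show ?thesis .
qed

text \<open>Decoders for the individual values b of \<open>Z\<^sub>k\<close> can be glued into one decoder: it reads off b
  from the k-th observed output.\<close>
lemma decoder_glue:
  fixes \<phi>s :: "nat \<Rightarrow> (nat \<Rightarrow> 'a) \<times> (nat \<Rightarrow> nat) \<times> 's \<Rightarrow> 'r"
  assumes k: "k \<in> {J+1..M}" and \<phi>s: "\<forall>b<N. \<forall>y. \<phi>s b y \<in> Rg" and r0: "r0 \<in> Rg"
  shows "\<exists>\<psi>. (\<forall>y. \<psi> y \<in> Rg) \<and> (\<forall>b<N. \<forall>u\<in>reduced_space M J k AX AS AV n.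
           \<psi> (insert_obs k (var_obs M J u) b) = \<phi>s b (var_obs M J u))"
proof -
  define \<psi> where "\<psi> = (\<lambda>(y1 :: nat \<Rightarrow> 'a, y2 :: nat \<Rightarrow> nat, y3 :: 's).
      if y2 k < N then \<phi>s (y2 k) (y1, y2(k := undefined), y3) else r0)"
  have "\<psi> (insert_obs k (var_obs M J u) b) = \<phi>s b (var_obs M J u)"
    if b: "b < N" and u\<Omega>: "u \<in> reduced_space M J k AX AS AV n" for b u
  proof -
    obtain x s v z where u: "u = ((x, s, v), z)" by (metis prod.collapse)
    have "z k = undefined" using reduced_space_undefined[OF u\<Omega>] u by simp
    then have "(restrict z {J+1..M})(k := undefined) = restrict z {J+1..M}"
      using k by (auto simp: fun_eq_iff restrict_def)
    then show ?thesis using b u by (simp add: \<psi>_def insert_obs_def var_obs_def)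
  qed
  moreover have "\<forall>y. \<psi> y \<in> Rg" using \<phi>s r0 by (auto simp: \<psi>_def split: prod.splits)
  ultimately show ?thesis by blast
qed

text \<open>Hence the minimal distortion \<open>D\<^sup>0\<^sub>l\<close> is the sum over b of the minimal decoder costs: an
  optimal decoder can be chosen separately for every value of \<open>Z\<^sub>k\<close>.\<close>
lemma dist0_split:
  fixes ARs :: "nat \<Rightarrow> 'r set" and d :: "nat \<Rightarrow> 'v \<Rightarrow> 'r \<Rightarrow> real"
    and p :: "(nat \<Rightarrow> 'a) \<times> 's \<times> 'v \<Rightarrow> real" and q :: "nat \<Rightarrow> 'a \<Rightarrow> nat \<Rightarrow> real"
  assumes k: "k \<in> {J+1..M}"
    and fin: "finite (reduced_space M J k AX AS AV n)" and fAR: "finite (ARs l)" and neAR: "ARs l \<noteq> {}"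
  shows "dist0 M J AX AS AV p (n(k := N)) (q(k := qk)) ARs d l
     = (\<Sum>b<N. min_decoder_cost (reduced_space M J k AX AS AV n) (reduced_pmf M J k p q) (var_x k) var_v
                 (var_obs M J) (ARs l) (d l) (\<lambda>x. qk x b))"
proof -
  let ?\<Omega> = "reduced_space M J k AX AS AV n"
  let ?R = "reduced_pmf M J k p q"
  let ?\<Psi> = "{\<psi> :: (nat \<Rightarrow> 'a) \<times> (nat \<Rightarrow> nat) \<times> 's \<Rightarrow> 'r. \<forall>y. \<psi> y \<in> ARs l}"
  define H where "H = (\<lambda>b (\<phi> :: (nat \<Rightarrow> 'a) \<times> (nat \<Rightarrow> nat) \<times> 's \<Rightarrow> 'r).
      decoder_cost ?\<Omega> ?R (var_x k) var_v (d l) (\<lambda>x. qk x b) (\<lambda>u. \<phi> (var_obs M J u)))"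
  obtain r0 where r0: "r0 \<in> ARs l" using neAR by auto
  have "Inf ((\<lambda>\<psi>. \<Sum>b<N. H b (\<lambda>y. \<psi> (insert_obs k y b))) ` ?\<Psi>) = (\<Sum>b<N. Inf (H b ` ?\<Psi>))"
  proof (rule Inf_sum_separable)
    fix b
    have "H b ` ?\<Psi> \<subseteq> (\<lambda>r. decoder_cost ?\<Omega> ?R (var_x k) var_v (d l) (\<lambda>x. qk x b) r) ` PiE ?\<Omega> (\<lambda>_. ARs l)"
    proof
      fix h assume "h \<in> H b ` ?\<Psi>"
      then obtain \<phi> where \<phi>: "\<forall>y. \<phi> y \<in> ARs l" "h = H b \<phi>" by auto
      have "restrict (\<lambda>u. \<phi> (var_obs M J u)) ?\<Omega> \<in> PiE ?\<Omega> (\<lambda>_. ARs l)"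
        unfolding restrict_PiE_iff using \<phi>(1) by blast
      then show "h \<in> (\<lambda>r. decoder_cost ?\<Omega> ?R (var_x k) var_v (d l) (\<lambda>x. qk x b) r) ` PiE ?\<Omega> (\<lambda>_. ARs l)"
        unfolding \<phi>(2) H_def by (subst decoder_cost_restrict) (rule imageI)
    qed
    moreover have "finite (PiE ?\<Omega> (\<lambda>_. ARs l))" using fin fAR by (simp add: finite_PiE)
    ultimately show "finite (H b ` ?\<Psi>)" by (meson finite_surj)
  next
    show "?\<Psi> \<noteq> {}" using r0 by (auto intro!: exI[of _ "\<lambda>_. r0"])
  next
    fix \<psi> b assume "\<psi> \<in> ?\<Psi>"
    then show "(\<lambda>y. \<psi> (insert_obs k y b)) \<in> ?\<Psi>" by blast
  next
    fix \<phi>s assume "\<forall>b<N. \<phi>s b \<in> ?\<Psi>"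
    then have "\<forall>b<N. \<forall>y. \<phi>s b y \<in> ARs l" by blast
    then obtain \<psi> where \<psi>: "\<forall>y. \<psi> y \<in> ARs l"
        "\<forall>b<N. \<forall>u\<in>?\<Omega>. \<psi> (insert_obs k (var_obs M J u) b) = \<phi>s b (var_obs M J u)"
      using decoder_glue[OF k _ r0] by blast
    have "H b (\<lambda>y. \<psi> (insert_obs k y b)) = H b (\<phi>s b)" if "b < N" for b
      unfolding H_def decoder_cost_def using \<psi>(2) that by (intro sum.cong) auto
    then show "\<exists>\<psi>\<in>?\<Psi>. \<forall>b<N. H b (\<lambda>y. \<psi> (insert_obs k y b)) = H b (\<phi>s b)" using \<psi>(1) by blast
  qed
  then show ?thesis
    unfolding dist0_def expected_distortion_split[OF k] by (simp add: H_def min_decoder_cost_def)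
qed

section \<open>The objective as a column-additive cost of the k-th channel\<close>

lemma joint_pmf_insert_z_eq_extend_pmf:
  assumes "k \<in> {J+1..M}"
  shows "(\<lambda>w. joint_pmf M J p (q(k := qk)) (insert_z k w)) = extend_pmf (reduced_pmf M J k p q) (var_x k) qk"
  by (intro ext) (simp add: joint_pmf_insert_z[OF assms] extend_pmf_def)

lemma var_x_insert_z: "(\<lambda>w. var_x i (insert_z k w)) = (\<lambda>w. var_x i (fst w))"
  by (auto simp: fun_eq_iff var_x_def insert_z_def split: prod.splits)

lemma var_z_insert_z: "i \<noteq> k \<Longrightarrow> (\<lambda>w. var_z i (insert_z k w)) = (\<lambda>w. var_z i (fst w))"
  by (auto simp: fun_eq_iff var_z_def insert_z_def split: prod.splits)

lemma var_z_insert_z_self: "(\<lambda>w. var_z k (insert_z k w)) = snd"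
  by (auto simp: fun_eq_iff var_z_def insert_z_def split: prod.splits)

lemma var_cond_insert_z: "i \<le> k \<Longrightarrow> (\<lambda>w. var_cond J i (insert_z k w)) = (\<lambda>w. var_cond J i (fst w))"
  by (auto simp: fun_eq_iff var_cond_def insert_z_def restrict_def split: prod.splits)

text \<open>For \<open>i > k\<close> the conditioning variable of \<open>R\<^sup>0\<^sub>i\<close> contains \<open>Z\<^sub>k\<close>: it determines the output b and
  the reduced conditioning variable.\<close>
lemma var_cond_insert_z_iff:
  assumes "k < i" "J + 1 \<le> k" "u \<in> reduced_space M J k AX AS AV n" "u' \<in> reduced_space M J k AX AS AV n"
  shows "var_cond J i (insert_z k (u', b')) = var_cond J i (insert_z k (u, b)) \<longleftrightarrow>
         var_cond J i u' = var_cond J i u \<and> b' = b"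
proof -
  obtain x s v z x' s' v' z' where u: "u = ((x, s, v), z)" and u': "u' = ((x', s', v'), z')"
    by (metis prod.collapse)
  have k: "k \<in> {J+1..<i}" using assms by auto
  have "z' k = z k" using reduced_space_undefined[OF assms(3)] reduced_space_undefined[OF assms(4)] u u' by simp
  then have "restrict (z'(k := b')) {J+1..<i} = restrict (z(k := b)) {J+1..<i} \<longleftrightarrow>
      restrict z' {J+1..<i} = restrict z {J+1..<i} \<and> b' = b"
    using k by (auto simp: fun_eq_iff restrict_def)
  then show ?thesis using u u' by (auto simp: var_cond_def insert_z_def)
qed

definition rate_const :: "nat \<Rightarrow> nat \<Rightarrow> nat \<Rightarrow> (nat \<Rightarrow> 'a set) \<Rightarrow> 's set \<Rightarrow> 'v set \<Rightarrow> ((nat \<Rightarrow> 'a) \<times> 's \<times> 'v \<Rightarrow> real)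
    \<Rightarrow> (nat \<Rightarrow> nat) \<Rightarrow> (nat \<Rightarrow> 'a \<Rightarrow> nat \<Rightarrow> real) \<Rightarrow> nat \<Rightarrow> real" where
  "rate_const M J k AX AS AV p n q i = (if i < k then
      cond_mutual_info (reduced_space M J k AX AS AV n) (reduced_pmf M J k p q) (var_x i) (var_z i) (var_cond J i)
    else 0)"

definition rate_column :: "nat \<Rightarrow> nat \<Rightarrow> nat \<Rightarrow> (nat \<Rightarrow> 'a set) \<Rightarrow> 's set \<Rightarrow> 'v set \<Rightarrow> ((nat \<Rightarrow> 'a) \<times> 's \<times> 'v \<Rightarrow> real)
    \<Rightarrow> (nat \<Rightarrow> nat) \<Rightarrow> (nat \<Rightarrow> 'a \<Rightarrow> nat \<Rightarrow> real)
    \<Rightarrow> nat \<Rightarrow> ('a \<Rightarrow> real) \<Rightarrow> real" where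
  "rate_column M J k AX AS AV p n q i col = (if i < k then 0
    else if i = k then cmi_output_column (reduced_space M J k AX AS AV n) (reduced_pmf M J k p q) (var_x k)
      (var_cond J k) col
    else cmi_column (reduced_space M J k AX AS AV n) (reduced_pmf M J k p q) (var_x k)
      (var_x i) (var_z i) (var_cond J i) col)"

text \<open>Rates of earlier encoders do not see \<open>Z\<^sub>k\<close>; the rate of encoder k is the information carried by
  \<open>Z\<^sub>k\<close> itself; later rates condition on \<open>Z\<^sub>k\<close> and split along its values.\<close>
lemma rate0_split:
  assumes k: "J + 1 \<le> k" "k \<le> M" and i: "i \<in> {J+1..M}"
    and s1: "\<forall>u\<in>reduced_space M J k AX AS AV n. (\<Sum>b<N. qk (var_x k u) b) = 1"
  shows "rate0 M J AX AS AV p (n(k := N)) (q(k := qk)) i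
     = rate_const M J k AX AS AV p n q i + (\<Sum>b<N. rate_column M J k AX AS AV p n q i (\<lambda>x. qk x b))"
proof -
  let ?\<Omega> = "reduced_space M J k AX AS AV n"
  let ?P = "extend_pmf (reduced_pmf M J k p q) (var_x k) qk"
  have kJM: "k \<in> {J+1..M}" using k by simp
  have r: "rate0 M J AX AS AV p (n(k := N)) (q(k := qk)) i =
     cond_mutual_info (?\<Omega> \<times> {..<N}) ?P
       (\<lambda>w. var_x i (fst w)) (\<lambda>w. var_z i (insert_z k w)) (\<lambda>w. var_cond J i (insert_z k w))"
    unfolding rate0_eq_cond_mutual_info cond_mutual_info_reindex[OF bij_insert_z[OF kJM]]
      joint_pmf_insert_z_eq_extend_pmf[OF kJM] var_x_insert_z ..
  consider "i < k" | "i = k" | "k < i" by linarith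
  then show ?thesis
  proof cases
    case 1
    then have "i \<noteq> k" "i \<le> k" by simp_all
    with 1 show ?thesis
      unfolding r var_z_insert_z[OF \<open>i \<noteq> k\<close>] var_cond_insert_z[OF \<open>i \<le> k\<close>]
      using cond_mutual_info_extend_fst[where c=qk and \<alpha>="var_x k" and N=N, OF s1] by (simp_all add: rate_const_def rate_column_def)
  next
    case 2
    have "rate0 M J AX AS AV p (n(k := N)) (q(k := qk)) i = cond_mutual_info (?\<Omega> \<times> {..<N}) ?P
        (\<lambda>w. var_x k (fst w)) snd (\<lambda>w. var_cond J k (fst w))"
      using r unfolding 2 var_z_insert_z_self var_cond_insert_z[OF order_refl] .
    then show ?thesis using 2 cond_mutual_info_extend_output[where c=qk and \<alpha>="var_x k" and N=N, OF s1] by (simp add: rate_const_def rate_column_def)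
  next
    case 3
    have "cond_mutual_info (?\<Omega> \<times> {..<N}) ?P
       (\<lambda>w. var_x i (fst w)) (\<lambda>w. var_z i (insert_z k w)) (\<lambda>w. var_cond J i (insert_z k w))
      = (\<Sum>b<N. cmi_column ?\<Omega> (reduced_pmf M J k p q) (var_x k) (var_x i) (var_z i) (var_cond J i) (\<lambda>x. qk x b))"
    proof (rule cond_mutual_info_extend_split)
      show "\<And>u b. var_x i (fst (u, b)) = var_x i u" by simp
      show "\<And>u b. var_z i (insert_z k (u, b)) = var_z i u"
        using 3 by (auto simp: var_z_def insert_z_def split: prod.splits)
      show "\<And>u u' b b'. u \<in> ?\<Omega> \<Longrightarrow> u' \<in> ?\<Omega> \<Longrightarrow> b < N \<Longrightarrow> b' < N \<Longrightarrow>
         var_cond J i (insert_z k (u', b')) = var_cond J i (insert_z k (u, b)) \<longleftrightarrow>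
         var_cond J i u' = var_cond J i u \<and> b' = b"
        using var_cond_insert_z_iff[OF 3 k(1)] by blast
    qed
    then show ?thesis unfolding r using 3 by (simp add: rate_const_def rate_column_def)
  qed
qed

definition objective_column :: "nat \<Rightarrow> nat \<Rightarrow> nat \<Rightarrow> nat \<Rightarrow> (nat \<Rightarrow> 'a set) \<Rightarrow> 's set \<Rightarrow> 'v set \<Rightarrow> ((nat \<Rightarrow> 'a) \<times> 's \<times> 'v \<Rightarrow> real)
    \<Rightarrow> (nat \<Rightarrow> nat) \<Rightarrow> (nat \<Rightarrow> 'a \<Rightarrow> nat \<Rightarrow> real)
    \<Rightarrow> (nat \<Rightarrow> 'r set) \<Rightarrow> (nat \<Rightarrow> 'v \<Rightarrow> 'r \<Rightarrow> real) \<Rightarrow> (nat \<Rightarrow> real) \<Rightarrow> ('a \<Rightarrow> real) \<Rightarrow> real" where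
  "objective_column M J L k AX AS AV p n q ARs d a col =
     (\<Sum>i=J+1..M. a i * rate_column M J k AX AS AV p n q i col) +
     (\<Sum>l=1..L. a (M + l) * min_decoder_cost (reduced_space M J k AX AS AV n) (reduced_pmf M J k p q)
        (var_x k) var_v (var_obs M J) (ARs l) (d l) col)"

definition objective_const :: "nat \<Rightarrow> nat \<Rightarrow> nat \<Rightarrow> (nat \<Rightarrow> 'a set) \<Rightarrow> 's set \<Rightarrow> 'v set \<Rightarrow> ((nat \<Rightarrow> 'a) \<times> 's \<times> 'v \<Rightarrow> real)
    \<Rightarrow> (nat \<Rightarrow> nat) \<Rightarrow> (nat \<Rightarrow> 'a \<Rightarrow> nat \<Rightarrow> real)
    \<Rightarrow> (nat \<Rightarrow> real) \<Rightarrow> real" where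
  "objective_const M J k AX AS AV p n q a = (\<Sum>i=J+1..M. a i * rate_const M J k AX AS AV p n q i)"

lemma objective_split:
  fixes ARs :: "nat \<Rightarrow> 'r set" and d :: "nat \<Rightarrow> 'v \<Rightarrow> 'r \<Rightarrow> real"
    and p :: "(nat \<Rightarrow> 'a) \<times> 's \<times> 'v \<Rightarrow> real" and q :: "nat \<Rightarrow> 'a \<Rightarrow> nat \<Rightarrow> real"
  assumes k: "J + 1 \<le> k" "k \<le> M" and fin: "finite (reduced_space M J k AX AS AV n)"
    and ARs: "\<forall>l\<in>{1..L}. finite (ARs l) \<and> ARs l \<noteq> {}" and ch: "is_channel (AX k) N qk"
  shows "objective M J L AX AS AV p ARs d a (n(k := N)) (q(k := qk))
     = objective_const M J k AX AS AV p n q a + channel_cost (objective_column M J L k AX AS AV p n q ARs d a) N qk"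
proof -
  have s1: "\<forall>u\<in>reduced_space M J k AX AS AV n. (\<Sum>b<N. qk (var_x k u) b) = 1"
    using ch var_x_reduced_space[of k M J AX AS AV n] k by (auto simp: is_channel_def)
  have "(\<Sum>i=J+1..M. a i * rate0 M J AX AS AV p (n(k := N)) (q(k := qk)) i)
       = (\<Sum>i=J+1..M. a i * rate_const M J k AX AS AV p n q i) +
         (\<Sum>i=J+1..M. \<Sum>b<N. a i * rate_column M J k AX AS AV p n q i (\<lambda>x. qk x b))"
    by (simp add: rate0_split[OF k _ s1] distrib_left sum_distrib_left sum.distrib)
  moreover have "(\<Sum>l=1..L. a (M + l) * dist0 M J AX AS AV p (n(k := N)) (q(k := qk)) ARs d l)
       = (\<Sum>l=1..L. \<Sum>b<N. a (M + l) * min_decoder_cost (reduced_space M J k AX AS AV n)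
            (reduced_pmf M J k p q) (var_x k) var_v (var_obs M J) (ARs l) (d l) (\<lambda>x. qk x b))"
    using ARs k by (intro sum.cong refl) (simp add: dist0_split[OF _ fin] sum_distrib_left)
  ultimately show ?thesis
    unfolding objective_def objective_const_def objective_column_def channel_cost_def
    by (simp add: sum.distrib sum.swap[of _ "{..<N}"])
qed

lemma column_functional_objective_column:
  assumes fin: "finite (reduced_space M J k AX AS AV n)" and k: "k \<in> {1..M}"
    and ARs: "\<forall>l\<in>{1..L}. finite (ARs l) \<and> ARs l \<noteq> {}"
  shows "column_functional (AX k) (objective_column M J L k AX AS AV p n q ARs d a)"
proof -
  note im = var_x_reduced_space[OF k, of J AX AS AV n]
  have "column_functional (AX k) (rate_column M J k AX AS AV p n q i)" for i
  proof -
    consider "i < k" | "i = k" | "k < i" by linarith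
    then show ?thesis
      by cases (simp_all add: rate_column_def[abs_def] column_functional_const_zero
          column_functional_cmi_column[OF im] column_functional_cmi_output_column[OF im])
  qed
  moreover have "column_functional (AX k) (min_decoder_cost (reduced_space M J k AX AS AV n)
      (reduced_pmf M J k p q) (var_x k) var_v (var_obs M J) (ARs l) (d l))" if "l \<in> {1..L}" for l
    using ARs that by (intro column_functional_min_decoder_cost[OF fin _ _ im]) auto
  ultimately have "column_functional (AX k) (\<lambda>c. (\<Sum>i=J+1..M. a i * rate_column M J k AX AS AV p n q i c))"
    "column_functional (AX k) (\<lambda>c. (\<Sum>l=1..L. a (M + l) * min_decoder_cost (reduced_space M J k AX AS AV n)
        (reduced_pmf M J k p q) (var_x k) var_v (var_obs M J) (ARs l) (d l) c))"
    by (auto intro: column_functional_lincomb)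
  then show ?thesis unfolding objective_column_def[abs_def] by (rule column_functional_add)
qed

lemma continuous_on_objective_column:
  assumes fin: "finite (reduced_space M J k AX AS AV n)" and k: "k \<in> {1..M}"
    and R: "\<And>u. u \<in> reduced_space M J k AX AS AV n \<Longrightarrow> 0 \<le> reduced_pmf M J k p q u"
    and ARs: "\<forall>l\<in>{1..L}. finite (ARs l) \<and> ARs l \<noteq> {}"
  shows "continuous_on {c. \<forall>x\<in>AX k. 0 \<le> c x \<and> c x \<le> 1} (objective_column M J L k AX AS AV p n q ARs d a)"
proof -
  note im = var_x_reduced_space[OF k, of J AX AS AV n]
  have "continuous_on {c. \<forall>x\<in>AX k. 0 \<le> c x \<and> c x \<le> 1} (rate_column M J k AX AS AV p n q i)" for i
  proof -
    consider "i < k" | "i = k" | "k < i" by linarith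
    then show ?thesis
      by cases (simp_all add: rate_column_def[abs_def] continuous_on_const
          continuous_on_cmi_column[OF fin R im] continuous_on_cmi_output_column[OF fin R im])
  qed
  then show ?thesis
    unfolding objective_column_def
    using ARs by (intro continuous_intros continuous_on_min_decoder_cost[OF fin]) auto
qed

lemma nonempty_alphabet:
  fixes p :: "(nat \<Rightarrow> 'a) \<times> 's \<times> 'v \<Rightarrow> real"
  assumes "(\<Sum>w\<in>src_space M AX AS AV. p w) = 1" "k \<in> {1..M}"
  shows "AX k \<noteq> {}"
proof -
  have "src_space M AX AS AV \<noteq> {}" using assms(1) by auto
  then obtain x s v where "(x, s, v) \<in> src_space M AX AS AV" by (metis prod_cases3 ex_in_conv)
  then show ?thesis using assms(2) by (auto simp: src_space_def PiE_iff)
qed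

theorem lemma9:
  fixes M J L k :: nat
    and AX :: "nat \<Rightarrow> 'a set" and AS :: "'s set" and AV :: "'v set"
    and p :: "(nat \<Rightarrow> 'a) \<times> 's \<times> 'v \<Rightarrow> real"
    and AR :: "nat \<Rightarrow> 'r set" and d :: "nat \<Rightarrow> 'v \<Rightarrow> 'r \<Rightarrow> real" and dmax :: "nat \<Rightarrow> real"
    and a :: "nat \<Rightarrow> real"
    and n :: "nat \<Rightarrow> nat" and q :: "nat \<Rightarrow> 'a \<Rightarrow> nat \<Rightarrow> real"
  assumes "1 \<le> M" and "J \<le> M" and "1 \<le> L"
    and "J + 1 \<le> k" and "k \<le> M"
    and "\<forall>i\<in>{1..M}. finite (AX i)" and "finite AS" and "finite AV"
    and "\<forall>w\<in>src_space M AX AS AV. 0 \<le> p w"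
    and "(\<Sum>w\<in>src_space M AX AS AV. p w) = 1"
    and "\<forall>l\<in>{1..L}. finite (AR l) \<and> AR l \<noteq> {}"
    and "\<forall>l\<in>{1..L}. \<forall>v\<in>AV. \<forall>r\<in>AR l. 0 \<le> d l v r \<and> d l v r \<le> dmax l"
    and "\<forall>i\<in>{J+1..M+L}. 0 \<le> a i"
    and "\<forall>\<kappa>\<in>{J+1..M} - {k}. is_channel (AX \<kappa>) (n \<kappa>) (q \<kappa>)"
  shows "\<exists>N qk. is_channel (AX k) N qk \<and> N \<le> card (AX k) \<and>
           (\<forall>N' qk'. is_channel (AX k) N' qk' \<longrightarrow>
              objective M J L AX AS AV p AR d a (n(k := N)) (q(k := qk))
                \<le> objective M J L AX AS AV p AR d a (n(k := N')) (q(k := qk')))"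
proof -
  have k: "k \<in> {1..M}" using assms(4,5) by simp
  have fin: "finite (reduced_space M J k AX AS AV n)"
    using assms(6-8) by (rule finite_reduced_space)
  let ?F = "objective_column M J L k AX AS AV p n q AR d a"
  text \<open>The objective is \<open>objective_const + channel_cost ?F N qk\<close>, so the abstract minimisation applies.\<close>
  have "\<exists>N qk. is_channel (AX k) N qk \<and> N \<le> card (AX k) \<and>
      (\<forall>N' qk'. is_channel (AX k) N' qk' \<longrightarrow> channel_cost ?F N qk \<le> channel_cost ?F N' qk')"
  proof (rule channel_cost_minimum)
    show "finite (AX k)" "AX k \<noteq> {}" using assms(6) k nonempty_alphabet[OF assms(10) k] by auto
    show "column_functional (AX k) ?F"
      using column_functional_objective_column[OF fin k assms(11)] .
    show "continuous_on {c. \<forall>x\<in>AX k. 0 \<le> c x \<and> c x \<le> 1} ?F"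
      using continuous_on_objective_column[OF fin k reduced_pmf_nonneg[OF assms(9,14)] assms(11)] .
  qed
  then show ?thesis
    using objective_split[OF assms(4,5) fin assms(11)] by (metis add_le_cancel_left)
qed

end
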